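(* Let $h$ be a Riemannian metric on a 3-dimensional domain, $\phi>0$ a smooth function of time, and consider the complete space-time with metric $g_{00}=\phi(t)^{-2}$, $g_{0i}=g_{i0}=0$, $g_{ij}=-h_{ij}(\vec x)$. If $u$ solves the Dirac equation $i\phi\partial_tu-Hu=0$, with $H$ as in the context, then $u$ also solves $$-(\phi\partial_t)^2u+\Delta_hu-\tfrac14\mathcal R_hu-m^2u=0,$$ where $\Delta_h$ is the Laplace–Beltrami operator and $\mathcal R_h$ the scalar curvature of $h$.
   Context: Dirac matrices: $\gamma^0=\mathrm{diag}(1,1,-1,-1)$, $\gamma^k=\gamma^0\alpha_k$, $\alpha_k=\begin{pmatrix}0&\sigma_k\\ \sigma_k&0\end{pmatrix}$ with $\sigma_k$ the Pauli matrices; $\eta=\mathrm{diag}(1,-1,-1,-1)$, $\gamma_a=\eta_{ab}\gamma^b$. Let $f_a^i$ be a time-independent dreibein ($h^{ij}=\sum_{a=1}^3f_a^if_a^j$), $\Lambda^k_{ij}$ the Christoffel symbols of $h$, $\alpha_i^{ab}=f^a_j\partial_if^{jb}+f^a_j\Lambda^j_{ik}f^{kb}$, $D_j=\partial_j+\frac18\alpha_j^{ab}[\gamma_a,\gamma_b]$, $\mathcal H=i\gamma^af_a^jD_j$, $m\ge0$, $H=-\gamma^0(\mathcal H+m)$, acting on $\mathbb{C}^4$-valued functions $u(t,\vec x)$. *)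

theory Defs
  imports "HOL-Analysis.Analysis"
begin

definition dpart :: "'a::euclidean_space \<Rightarrow> ('a \<Rightarrow> 'b::real_normed_vector) \<Rightarrow> 'a \<Rightarrow> 'b" where
  "dpart v F x = vector_derivative (\<lambda>s. F (x + s *\<^sub>R v)) (at 0)"

fun iter_dpart :: "'a::euclidean_space list \<Rightarrow> ('a \<Rightarrow> 'b::real_normed_vector) \<Rightarrow> 'a \<Rightarrow> 'b" where
  "iter_dpart [] F = F"
| "iter_dpart (v # vs) F = dpart v (iter_dpart vs F)"

definition smooth_on :: "'a::euclidean_space set \<Rightarrow> ('a \<Rightarrow> 'b::real_normed_vector) \<Rightarrow> bool" where
  "smooth_on S F \<longleftrightarrow>
     (\<forall>vs. set vs \<subseteq> Basis \<longrightarrow>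
        continuous_on S (iter_dpart vs F) \<and>
        (\<forall>v\<in>Basis. \<forall>x\<in>S.
           ((\<lambda>s. iter_dpart vs F (x + s *\<^sub>R v)) has_vector_derivative dpart v (iter_dpart vs F) x) (at 0)))"

definition pd :: "3 \<Rightarrow> (real^3 \<Rightarrow> 'b::real_normed_vector) \<Rightarrow> real^3 \<Rightarrow> 'b" where
  "pd i F x = dpart (axis i 1) F x"

definition dt :: "(real \<Rightarrow> real^3 \<Rightarrow> 'b::real_normed_vector) \<Rightarrow> real \<Rightarrow> real^3 \<Rightarrow> 'b" where
  "dt u t x = vector_derivative (\<lambda>s. u s x) (at t)"

definition gamma0 :: "complex^4^4" where
  "gamma0 = vector [vector [1,0,0,0], vector [0,1,0,0], vector [0,0,-1,0], vector [0,0,0,-1]]"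

definition pauli :: "3 \<Rightarrow> complex^2^2" where
  "pauli k = (if k = 1 then vector [vector [0,1], vector [1,0]]
              else if k = 2 then vector [vector [0,-\<i>], vector [\<i>,0]]
              else vector [vector [1,0], vector [0,-1]])"

text \<open>Block structure of C^4 = C^2 (+) C^2: indices 1,2 form the upper block, 3,4 the lower block.\<close>
definition lower_blk :: "4 \<Rightarrow> bool" where "lower_blk i \<longleftrightarrow> (i = 3 \<or> i = 4)"
definition sub_idx :: "4 \<Rightarrow> 2" where "sub_idx i = (if i = 1 \<or> i = 3 then 1 else 2)"

text \<open>alpha_k = ((0, sigma_k), (sigma_k, 0)).\<close>
definition alpha :: "3 \<Rightarrow> complex^4^4" where
  "alpha k = (\<chi> i j. if lower_blk i \<noteq> lower_blk j then pauli k $ sub_idx i $ sub_idx j else 0)"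

definition gamma_up :: "3 \<Rightarrow> complex^4^4" where
  "gamma_up k = gamma0 ** alpha k"

text \<open>eta_{aa} = -1 for spatial a; gamma_a = eta_{ab} gamma^b.\<close>
definition eta_sp :: real where "eta_sp = -1"

definition gamma_low :: "3 \<Rightarrow> complex^4^4" where
  "gamma_low a = eta_sp *\<^sub>R gamma_up a"

text \<open>f a i x = f_a^i(x).  h^{ij} = sum_a f_a^i f_a^j.\<close>
definition hinv :: "(3 \<Rightarrow> 3 \<Rightarrow> real^3 \<Rightarrow> real) \<Rightarrow> 3 \<Rightarrow> 3 \<Rightarrow> real^3 \<Rightarrow> real" where
  "hinv f i j x = (\<Sum>a\<in>UNIV. f a i x * f a j x)"

definition hlow :: "(3 \<Rightarrow> 3 \<Rightarrow> real^3 \<Rightarrow> real) \<Rightarrow> 3 \<Rightarrow> 3 \<Rightarrow> real^3 \<Rightarrow> real" where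
  "hlow f i j x = matrix_inv (\<chi> k l. hinv f k l x) $ i $ j"

definition chr :: "(3 \<Rightarrow> 3 \<Rightarrow> real^3 \<Rightarrow> real) \<Rightarrow> 3 \<Rightarrow> 3 \<Rightarrow> 3 \<Rightarrow> real^3 \<Rightarrow> real" where
  "chr f k i j x = (1/2) * (\<Sum>l\<in>UNIV. hinv f k l x *
      (pd i (hlow f l j) x + pd j (hlow f l i) x - pd l (hlow f i j) x))"

definition gsp :: "(3 \<Rightarrow> 3 \<Rightarrow> real^3 \<Rightarrow> real) \<Rightarrow> 3 \<Rightarrow> 3 \<Rightarrow> real^3 \<Rightarrow> real" where
  "gsp f j k x = - hlow f j k x"

text \<open>f^a_j = eta^{aa} g_{jk} f_a^k  (frame index raised by eta, coordinate index lowered by g).\<close>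
definition f_co :: "(3 \<Rightarrow> 3 \<Rightarrow> real^3 \<Rightarrow> real) \<Rightarrow> 3 \<Rightarrow> 3 \<Rightarrow> real^3 \<Rightarrow> real" where
  "f_co f a j x = eta_sp * (\<Sum>k\<in>UNIV. gsp f j k x * f a k x)"

definition f_up :: "(3 \<Rightarrow> 3 \<Rightarrow> real^3 \<Rightarrow> real) \<Rightarrow> 3 \<Rightarrow> 3 \<Rightarrow> real^3 \<Rightarrow> real" where
  "f_up f j b x = eta_sp * f b j x"

definition alpha_conn :: "(3 \<Rightarrow> 3 \<Rightarrow> real^3 \<Rightarrow> real) \<Rightarrow> 3 \<Rightarrow> 3 \<Rightarrow> 3 \<Rightarrow> real^3 \<Rightarrow> real" where
  "alpha_conn f i a b x =
     (\<Sum>j\<in>UNIV. f_co f a j x * pd i (f_up f j b) x)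
   + (\<Sum>j\<in>UNIV. \<Sum>k\<in>UNIV. f_co f a j x * chr f j i k x * f_up f k b x)"

definition Dsp :: "(3 \<Rightarrow> 3 \<Rightarrow> real^3 \<Rightarrow> real) \<Rightarrow> 3 \<Rightarrow> (real^3 \<Rightarrow> complex^4) \<Rightarrow> real^3 \<Rightarrow> complex^4" where
  "Dsp f j U x = pd j U x +
     (\<Sum>a\<in>UNIV. \<Sum>b\<in>UNIV. (alpha_conn f j a b x / 8) *\<^sub>R
        (gamma_low a ** gamma_low b - gamma_low b ** gamma_low a)) *v U x"

definition Hcal :: "(3 \<Rightarrow> 3 \<Rightarrow> real^3 \<Rightarrow> real) \<Rightarrow> (real^3 \<Rightarrow> complex^4) \<Rightarrow> real^3 \<Rightarrow> complex^4" where
  "Hcal f U x = \<i> *s (\<Sum>a\<in>UNIV. \<Sum>j\<in>UNIV. f a j x *\<^sub>R (gamma_up a *v Dsp f j U x))"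

definition Hop :: "(3 \<Rightarrow> 3 \<Rightarrow> real^3 \<Rightarrow> real) \<Rightarrow> real \<Rightarrow> (real^3 \<Rightarrow> complex^4) \<Rightarrow> real^3 \<Rightarrow> complex^4" where
  "Hop f m U x = - (gamma0 *v (Hcal f U x + complex_of_real m *s U x))"

text \<open>Laplace-Beltrami operator of h acting on spinor fields (covariant, via D):
  Delta_h U = h^{ij} (D_i D_j U - Lambda^k_{ij} D_k U).\<close>
definition lap :: "(3 \<Rightarrow> 3 \<Rightarrow> real^3 \<Rightarrow> real) \<Rightarrow> (real^3 \<Rightarrow> complex^4) \<Rightarrow> real^3 \<Rightarrow> complex^4" where
  "lap f U x = (\<Sum>i\<in>UNIV. \<Sum>j\<in>UNIV. hinv f i j x *\<^sub>R
      (Dsp f i (Dsp f j U) x - (\<Sum>k\<in>UNIV. chr f k i j x *\<^sub>R Dsp f k U x)))"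

text \<open>Ricci tensor R_{ij} = d_k Lambda^k_{ij} - d_j Lambda^k_{ik} + Lambda^k_{kl} Lambda^l_{ij} - Lambda^k_{jl} Lambda^l_{ik}
  and scalar curvature R_h = h^{ij} R_{ij} (positive on round spheres).\<close>
definition ricci :: "(3 \<Rightarrow> 3 \<Rightarrow> real^3 \<Rightarrow> real) \<Rightarrow> 3 \<Rightarrow> 3 \<Rightarrow> real^3 \<Rightarrow> real" where
  "ricci f i j x = (\<Sum>k\<in>UNIV. pd k (chr f k i j) x - pd j (chr f k i k) x
      + (\<Sum>l\<in>UNIV. chr f k k l x * chr f l i j x - chr f k j l x * chr f l i k x))"

definition scal :: "(3 \<Rightarrow> 3 \<Rightarrow> real^3 \<Rightarrow> real) \<Rightarrow> real^3 \<Rightarrow> real" where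
  "scal f x = (\<Sum>i\<in>UNIV. \<Sum>j\<in>UNIV. hinv f i j x * ricci f i j x)"

end

theory Submission
  imports Defs
begin

text \<open>
  The Dirac equation says \<open>\<phi> \<partial>\<^sub>t u = -\<i> H u\<close>. Since \<open>H\<close> does not depend on \<open>t\<close>, applying
  \<open>\<phi> \<partial>\<^sub>t\<close> once more gives \<open>(\<phi> \<partial>\<^sub>t)\<^sup>2 u = -H\<^sup>2 u\<close>. As \<open>\<gamma>\<^sup>0\<close> anticommutes with the
  curved gamma matrices \<open>\<gamma>\<^sup>j = f\<^sub>a\<^sup>j \<gamma>\<^sup>a\<close> and commutes with the spin connection, the cross
  terms of \<open>H\<^sup>2\<close> cancel and \<open>H\<^sup>2 = m\<^sup>2 - \<H>\<^sup>2\<close>. What remains is the Lichnerowicz formula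
  \<open>\<H>\<^sup>2 = \<Delta>\<^sub>h - \<R>\<^sub>h/4\<close>: by the Clifford relation \<open>\<gamma>\<^sup>i\<gamma>\<^sup>j + \<gamma>\<^sup>j\<gamma>\<^sup>i = -2h\<^sup>i\<^sup>j\<close>, the operator
  \<open>-\<gamma>\<^sup>i\<gamma>\<^sup>j\<nabla>\<^sub>i\<nabla>\<^sub>j\<close> splits into \<open>\<Delta>\<^sub>h\<close> and a Clifford contraction of the spin curvature
  \<open>[\<nabla>\<^sub>i, \<nabla>\<^sub>j]\<close>. Cartan's structure equation expresses that curvature through the Riemann
  tensor, and the first Bianchi identity collapses its contraction to the scalar curvature.
\<close>

definition has_partials_on :: "(real^3) set \<Rightarrow> (real^3 \<Rightarrow> 'b::real_normed_vector) \<Rightarrow> bool" where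
  "has_partials_on S F \<longleftrightarrow>
     (\<forall>x\<in>S. \<forall>i. ((\<lambda>s. F (x + s *\<^sub>R axis i 1)) has_vector_derivative pd i F x) (at 0))"

definition has_partials2_on :: "(real^3) set \<Rightarrow> (real^3 \<Rightarrow> 'b::real_normed_vector) \<Rightarrow> bool" where
  "has_partials2_on S F \<longleftrightarrow> has_partials_on S F \<and> (\<forall>i. has_partials_on S (pd i F))"

lemma pd_eqI:
  "((\<lambda>s. F (x + s *\<^sub>R axis i 1)) has_vector_derivative D) (at 0) \<Longrightarrow> pd i F x = D"
  unfolding pd_def dpart_def by (rule vector_derivative_at)

lemma has_partials_onI:
  "(\<And>x i. x \<in> S \<Longrightarrow> \<exists>D. ((\<lambda>s. F (x + s *\<^sub>R axis i 1)) has_vector_derivative D) (at 0))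
   \<Longrightarrow> has_partials_on S F"
  unfolding has_partials_on_def using pd_eqI by metis

lemma has_partials_onD:
  "has_partials_on S F \<Longrightarrow> x \<in> S \<Longrightarrow>
   ((\<lambda>s. F (x + s *\<^sub>R axis i 1)) has_vector_derivative pd i F x) (at 0)"
  unfolding has_partials_on_def by blast

lemma has_partials2_onD:
  "has_partials2_on S F \<Longrightarrow> has_partials_on S F"
  "has_partials2_on S F \<Longrightarrow> has_partials_on S (pd i F)"
  unfolding has_partials2_on_def by blast+

lemma open_line_preimage:
  fixes x v :: "'a::real_normed_vector"
  assumes "open S" shows "open {s::real. x + s *\<^sub>R v \<in> S}"
proof -
  have "isCont (\<lambda>s::real. x + s *\<^sub>R v) s" for s by (intro continuous_intros)
  from continuous_open_vimage[OF assms this] show ?thesis by (simp add: vimage_def)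
qed

lemma pd_cong:
  assumes "open S" "x \<in> S" "\<And>y. y \<in> S \<Longrightarrow> F y = G y"
  shows "pd i F x = pd i G x"
proof -
  have "eventually (\<lambda>s. F (x + s *\<^sub>R axis i 1) = G (x + s *\<^sub>R axis i 1)) (nhds (0::real))"
    unfolding eventually_nhds using open_line_preimage[OF assms(1)] assms(2,3)
    by (intro exI[of _ "{s::real. x + s *\<^sub>R axis i 1 \<in> S}"]) auto
  then show ?thesis unfolding pd_def dpart_def
    by (intro vector_derivative_cong_eq) auto
qed

lemma has_partials_on_cong:
  assumes "open S" "has_partials_on S F" "\<And>y. y \<in> S \<Longrightarrow> F y = G y"
  shows "has_partials_on S G"
proof (rule has_partials_onI)
  fix x i assume x: "x \<in> S"
  have "((\<lambda>s. G (x + s *\<^sub>R axis i 1)) has_vector_derivative pd i F x) (at 0)"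
    by (rule has_vector_derivative_transform_within_open[OF has_partials_onD[OF assms(2) x]
          open_line_preimage[OF assms(1)]]) (use x assms(3) in auto)
  then show "\<exists>D. ((\<lambda>s. G (x + s *\<^sub>R axis i 1)) has_vector_derivative D) (at 0)" by blast
qed

lemma
  assumes P: "bounded_bilinear P" and F: "has_partials_on S F" and G: "has_partials_on S G"
  shows has_partials_on_bilinear: "has_partials_on S (\<lambda>x. P (F x) (G x))"
    and pd_bilinear: "x \<in> S \<Longrightarrow> pd i (\<lambda>x. P (F x) (G x)) x = P (F x) (pd i G x) + P (pd i F x) (G x)"
proof -
  have *: "((\<lambda>s. P (F (x + s *\<^sub>R axis i 1)) (G (x + s *\<^sub>R axis i 1))) has_vector_derivative
     P (F x) (pd i G x) + P (pd i F x) (G x)) (at 0)" if "x \<in> S" for x i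
    using bounded_bilinear.has_vector_derivative[OF P
        has_partials_onD[OF F that] has_partials_onD[OF G that]]
    by simp
  show "has_partials_on S (\<lambda>x. P (F x) (G x))" using * by (intro has_partials_onI) blast
  show "x \<in> S \<Longrightarrow> pd i (\<lambda>x. P (F x) (G x)) x = P (F x) (pd i G x) + P (pd i F x) (G x)"
    using * by (intro pd_eqI)
qed

lemma
  assumes L: "bounded_linear L" and F: "has_partials_on S F"
  shows has_partials_on_linear: "has_partials_on S (\<lambda>x. L (F x))"
    and pd_linear: "x \<in> S \<Longrightarrow> pd i (\<lambda>x. L (F x)) x = L (pd i F x)"
proof -
  have *: "((\<lambda>s. L (F (x + s *\<^sub>R axis i 1))) has_vector_derivative L (pd i F x)) (at 0)"
    if "x \<in> S" for x i
    using bounded_linear.has_vector_derivative[OF L has_partials_onD[OF F that]] by simp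
  show "has_partials_on S (\<lambda>x. L (F x))" using * by (intro has_partials_onI) blast
  show "x \<in> S \<Longrightarrow> pd i (\<lambda>x. L (F x)) x = L (pd i F x)" using * by (intro pd_eqI)
qed

lemma has_partials_on_const: "has_partials_on S (\<lambda>x. c)"
  by (intro has_partials_onI) (auto intro!: derivative_eq_intros)

lemma pd_const: "pd i (\<lambda>x. c) x = 0"
  by (rule pd_eqI) (auto intro!: derivative_eq_intros)

lemma
  assumes F: "has_partials_on S F" and G: "has_partials_on S G"
  shows has_partials_on_add: "has_partials_on S (\<lambda>x. F x + G x)"
    and pd_add: "x \<in> S \<Longrightarrow> pd i (\<lambda>x. F x + G x) x = pd i F x + pd i G x"
proof -
  have *: "((\<lambda>s. F (x + s *\<^sub>R axis i 1) + G (x + s *\<^sub>R axis i 1)) has_vector_derivative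
      pd i F x + pd i G x) (at 0)" if "x \<in> S" for x i
    using has_vector_derivative_add[OF has_partials_onD[OF F that] has_partials_onD[OF G that]] .
  show "has_partials_on S (\<lambda>x. F x + G x)" using * by (intro has_partials_onI) blast
  show "x \<in> S \<Longrightarrow> pd i (\<lambda>x. F x + G x) x = pd i F x + pd i G x" using * by (intro pd_eqI)
qed

lemma
  assumes F: "has_partials_on S F"
  shows has_partials_on_minus: "has_partials_on S (\<lambda>x. - F x)"
    and pd_minus: "x \<in> S \<Longrightarrow> pd i (\<lambda>x. - F x) x = - pd i F x"
  using has_partials_on_linear[OF bounded_linear_minus[OF bounded_linear_ident] F]
    pd_linear[OF bounded_linear_minus[OF bounded_linear_ident] F] by simp_all

lemma has_partials_on_diff:
  "has_partials_on S F \<Longrightarrow> has_partials_on S G \<Longrightarrow> has_partials_on S (\<lambda>x. F x - G x)"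
  using has_partials_on_add[OF _ has_partials_on_minus] by simp

lemma
  assumes "finite A" "\<And>a. a \<in> A \<Longrightarrow> has_partials_on S (F a)"
  shows has_partials_on_sum: "has_partials_on S (\<lambda>x. \<Sum>a\<in>A. F a x)"
    and pd_sum: "x \<in> S \<Longrightarrow> pd i (\<lambda>x. \<Sum>a\<in>A. F a x) x = (\<Sum>a\<in>A. pd i (F a) x)"
proof -
  have *: "((\<lambda>s. \<Sum>a\<in>A. F a (x + s *\<^sub>R axis i 1)) has_vector_derivative (\<Sum>a\<in>A. pd i (F a) x)) (at 0)"
    if "x \<in> S" for x i
    by (rule has_vector_derivative_sum) (use has_partials_onD[OF assms(2) that] in auto)
  show "has_partials_on S (\<lambda>x. \<Sum>a\<in>A. F a x)" using * by (intro has_partials_onI) blast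
  show "x \<in> S \<Longrightarrow> pd i (\<lambda>x. \<Sum>a\<in>A. F a x) x = (\<Sum>a\<in>A. pd i (F a) x)"
    using * by (intro pd_eqI)
qed

lemmas has_partials_on_mult = has_partials_on_bilinear[OF bounded_bilinear_mult]
lemmas pd_mult = pd_bilinear[OF bounded_bilinear_mult]

lemma
  assumes F: "has_partials_on S F" and nz: "\<And>x. x \<in> S \<Longrightarrow> F x \<noteq> (0::real)"
  shows has_partials_on_inverse: "has_partials_on S (\<lambda>x. inverse (F x))"
    and pd_inverse: "x \<in> S \<Longrightarrow> pd i (\<lambda>x. inverse (F x)) x = - (inverse (F x) * pd i F x * inverse (F x))"
proof -
  have *: "((\<lambda>s. inverse (F (x + s *\<^sub>R axis i 1))) has_vector_derivative
      - (inverse (F x) * pd i F x * inverse (F x))) (at 0)" if "x \<in> S" for x i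
  proof -
    have "((\<lambda>s. F (x + s *\<^sub>R axis i 1)) has_real_derivative pd i F x) (at 0)"
      using has_partials_onD[OF F that] by (simp add: has_real_derivative_iff_has_vector_derivative)
    from DERIV_inverse'[OF this] nz[OF that]
    show ?thesis by (simp add: has_real_derivative_iff_has_vector_derivative)
  qed
  show "has_partials_on S (\<lambda>x. inverse (F x))" using * by (intro has_partials_onI) blast
  show "x \<in> S \<Longrightarrow> pd i (\<lambda>x. inverse (F x)) x = - (inverse (F x) * pd i F x * inverse (F x))"
    using * by (intro pd_eqI)
qed

lemma has_partials2_on_cong:
  assumes S: "open S" and F: "has_partials2_on S F" and eq: "\<And>y. y \<in> S \<Longrightarrow> F y = G y"
  shows "has_partials2_on S G"
  unfolding has_partials2_on_def
proof (intro conjI allI)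
  show "has_partials_on S G" by (rule has_partials_on_cong[OF S has_partials2_onD(1)[OF F] eq])
  fix i show "has_partials_on S (pd i G)"
    by (rule has_partials_on_cong[OF S has_partials2_onD(2)[OF F]]) (rule pd_cong[OF S _ eq])
qed

lemma has_partials2_on_bilinear:
  assumes P: "bounded_bilinear P" and S: "open S"
    and F: "has_partials2_on S F" and G: "has_partials2_on S G"
  shows "has_partials2_on S (\<lambda>x. P (F x) (G x))"
  unfolding has_partials2_on_def
proof (intro conjI allI)
  note F' = has_partials2_onD[OF F] and G' = has_partials2_onD[OF G]
  show "has_partials_on S (\<lambda>x. P (F x) (G x))" by (rule has_partials_on_bilinear[OF P F'(1) G'(1)])
  fix i
  have "has_partials_on S (\<lambda>x. P (F x) (pd i G x) + P (pd i F x) (G x))"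
    by (intro has_partials_on_add has_partials_on_bilinear[OF P] F' G')
  then show "has_partials_on S (pd i (\<lambda>x. P (F x) (G x)))"
    by (rule has_partials_on_cong[OF S]) (simp add: pd_bilinear[OF P F'(1) G'(1)])
qed

lemma has_partials2_on_linear:
  assumes L: "bounded_linear L" and S: "open S" and F: "has_partials2_on S F"
  shows "has_partials2_on S (\<lambda>x. L (F x))"
  unfolding has_partials2_on_def
proof (intro conjI allI)
  note F' = has_partials2_onD[OF F]
  show "has_partials_on S (\<lambda>x. L (F x))" by (rule has_partials_on_linear[OF L F'(1)])
  fix i
  have "has_partials_on S (\<lambda>x. L (pd i F x))" by (rule has_partials_on_linear[OF L F'(2)])
  then show "has_partials_on S (pd i (\<lambda>x. L (F x)))"
    by (rule has_partials_on_cong[OF S]) (simp add: pd_linear[OF L F'(1)])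
qed

lemmas has_partials2_on_mult = has_partials2_on_bilinear[OF bounded_bilinear_mult]

lemma has_partials2_on_const: "has_partials2_on S (\<lambda>x. c)"
  unfolding has_partials2_on_def pd_const by (simp add: has_partials_on_const)

lemma has_partials2_on_add:
  assumes S: "open S" and F: "has_partials2_on S F" and G: "has_partials2_on S G"
  shows "has_partials2_on S (\<lambda>x. F x + G x)"
  unfolding has_partials2_on_def
proof (intro conjI allI)
  note F' = has_partials2_onD[OF F] and G' = has_partials2_onD[OF G]
  show "has_partials_on S (\<lambda>x. F x + G x)" by (rule has_partials_on_add[OF F'(1) G'(1)])
  fix i
  have "has_partials_on S (\<lambda>x. pd i F x + pd i G x)" by (rule has_partials_on_add[OF F'(2) G'(2)])
  then show "has_partials_on S (pd i (\<lambda>x. F x + G x))"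
    by (rule has_partials_on_cong[OF S]) (simp add: pd_add[OF F'(1) G'(1)])
qed

lemma has_partials2_on_diff:
  assumes S: "open S" and F: "has_partials2_on S F" and G: "has_partials2_on S G"
  shows "has_partials2_on S (\<lambda>x. F x - G x)"
  using has_partials2_on_add[OF S F
      has_partials2_on_linear[OF bounded_linear_minus[OF bounded_linear_ident] S G]]
  by simp

lemma has_partials2_on_sum:
  assumes S: "open S" and "finite A" and "\<And>a. a \<in> A \<Longrightarrow> has_partials2_on S (F a)"
  shows "has_partials2_on S (\<lambda>x. \<Sum>a\<in>A. F a x)"
  using assms(2,3)
  by (induction A rule: finite_induct) (simp_all add: has_partials2_on_const has_partials2_on_add[OF S])

lemma has_partials2_on_inverse:
  assumes S: "open S" and F: "has_partials2_on S F" and nz: "\<And>x. x \<in> S \<Longrightarrow> F x \<noteq> (0::real)"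
  shows "has_partials2_on S (\<lambda>x. inverse (F x))"
  unfolding has_partials2_on_def
proof (intro conjI allI)
  note F' = has_partials2_onD[OF F]
  show "has_partials_on S (\<lambda>x. inverse (F x))" by (rule has_partials_on_inverse[OF F'(1) nz])
  fix i
  have "has_partials_on S (\<lambda>x. - (inverse (F x) * pd i F x * inverse (F x)))"
    by (intro has_partials_on_minus has_partials_on_mult has_partials_on_inverse[OF F'(1) nz] F'(2))
      auto
  then show "has_partials_on S (pd i (\<lambda>x. inverse (F x)))"
    by (rule has_partials_on_cong[OF S]) (simp add: pd_inverse[OF F'(1) nz])
qed

section \<open>Smoothness and symmetry of second partial derivatives\<close>

lemma has_vector_derivative_shift_iff:
  fixes g :: "real \<Rightarrow> 'b::real_normed_vector"
  shows "((\<lambda>s. g (t + s)) has_vector_derivative D) (at 0) \<longleftrightarrow> (g has_vector_derivative D) (at t)"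
proof
  assume A: "((\<lambda>s. g (t + s)) has_vector_derivative D) (at 0)"
  have i: "((\<lambda>\<sigma>::real. \<sigma> - t) has_vector_derivative 1) (at t)" by (auto intro!: derivative_eq_intros)
  have "(((\<lambda>s. g (t + s)) \<circ> (\<lambda>\<sigma>. \<sigma> - t)) has_vector_derivative (1 *\<^sub>R D)) (at t)"
    by (rule vector_diff_chain_at[OF i]) (use A in simp)
  moreover have "((\<lambda>s. g (t + s)) \<circ> (\<lambda>\<sigma>. \<sigma> - t)) = g" by (auto simp: o_def)
  ultimately show "(g has_vector_derivative D) (at t)" by simp
next
  assume A: "(g has_vector_derivative D) (at t)"
  have i: "((\<lambda>s::real. t + s) has_vector_derivative 1) (at 0)" by (auto intro!: derivative_eq_intros)
  have "((g \<circ> (\<lambda>s. t + s)) has_vector_derivative (1 *\<^sub>R D)) (at 0)"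
    by (rule vector_diff_chain_at[OF i]) (use A in simp)
  then show "((\<lambda>s. g (t + s)) has_vector_derivative D) (at 0)" by (simp add: o_def)
qed

lemma vector_derivative_shift:
  "vector_derivative (\<lambda>s. g (t + s)) (at 0) = vector_derivative g (at t)"
  unfolding vector_derivative_def using has_vector_derivative_shift_iff[of g t] by simp

lemma has_real_derivative_along_line:
  fixes G :: "'a::real_normed_vector \<Rightarrow> real"
  assumes "\<And>y. y \<in> S \<Longrightarrow> ((\<lambda>s. G (y + s *\<^sub>R v)) has_real_derivative G' y) (at 0)"
    and "y + s0 *\<^sub>R v \<in> S"
  shows "((\<lambda>s. G (y + s *\<^sub>R v)) has_real_derivative G' (y + s0 *\<^sub>R v)) (at s0)"
proof -
  have "((\<lambda>\<sigma>. G ((y + s0 *\<^sub>R v) + \<sigma> *\<^sub>R v)) has_real_derivative G'(y + s0 *\<^sub>R v)) (at 0)"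
    using assms by blast
  moreover have "(\<lambda>\<sigma>. G ((y + s0 *\<^sub>R v) + \<sigma> *\<^sub>R v)) = (\<lambda>\<sigma>. (\<lambda>s. G (y + s *\<^sub>R v)) (\<sigma> + s0))"
    by (auto simp: algebra_simps)
  ultimately show ?thesis using DERIV_shift[of "\<lambda>s. G(y + s *\<^sub>R v)" _ 0 s0] by simp
qed

lemma mixed_difference_mvt:
  fixes F Fv Fvw :: "'a::real_normed_vector \<Rightarrow> real"
  assumes dv: "\<And>y. y \<in> S \<Longrightarrow> ((\<lambda>s. F (y + s *\<^sub>R v)) has_real_derivative Fv y) (at 0)"
    and dvw: "\<And>y. y \<in> S \<Longrightarrow> ((\<lambda>s. Fv (y + s *\<^sub>R w)) has_real_derivative Fvw y) (at 0)"
    and h: "h > 0"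
    and sub: "\<And>s r. 0 \<le> s \<Longrightarrow> s \<le> h \<Longrightarrow> 0 \<le> r \<Longrightarrow> r \<le> h \<Longrightarrow> x + s *\<^sub>R v + r *\<^sub>R w \<in> S"
  shows "\<exists>\<xi> \<eta>. 0 < \<xi> \<and> \<xi> < h \<and> 0 < \<eta> \<and> \<eta> < h \<and>
    F (x + h *\<^sub>R v + h *\<^sub>R w) - F (x + h *\<^sub>R v) - F (x + h *\<^sub>R w) + F x
      = h * h * Fvw (x + \<xi> *\<^sub>R v + \<eta> *\<^sub>R w)"
proof -
  have dd: "DERIV (\<lambda>s. F ((x + h *\<^sub>R w) + s *\<^sub>R v) - F (x + s *\<^sub>R v)) s :>
      (Fv ((x + h *\<^sub>R w) + s *\<^sub>R v) - Fv (x + s *\<^sub>R v))" if "0 \<le> s" "s \<le> h" for s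
  proof -
    have "x + h *\<^sub>R w + s *\<^sub>R v \<in> S"
      using sub[of s h] that h by (simp add: add_ac)
    moreover have "x + s *\<^sub>R v \<in> S" using sub[of s 0] that h by simp
    ultimately show ?thesis
      by (intro DERIV_diff has_real_derivative_along_line[where S = S, OF dv])
  qed
  obtain \<xi> where \<xi>: "0 < \<xi>" "\<xi> < h"
    "(F ((x + h *\<^sub>R w) + h *\<^sub>R v) - F (x + h *\<^sub>R v)) - (F ((x + h *\<^sub>R w) + 0 *\<^sub>R v) - F (x + 0 *\<^sub>R v))
     = (h - 0) * (Fv ((x + h *\<^sub>R w) + \<xi> *\<^sub>R v) - Fv (x + \<xi> *\<^sub>R v))"
    using MVT2[OF h, of "\<lambda>s. F ((x + h *\<^sub>R w) + s *\<^sub>R v) - F (x + s *\<^sub>R v)"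
        "\<lambda>s. Fv ((x + h *\<^sub>R w) + s *\<^sub>R v) - Fv (x + s *\<^sub>R v)"] dd by blast
  have ee: "DERIV (\<lambda>r. Fv ((x + \<xi> *\<^sub>R v) + r *\<^sub>R w)) r :> Fvw ((x + \<xi> *\<^sub>R v) + r *\<^sub>R w)"
    if "0 \<le> r" "r \<le> h" for r
  proof -
    have "x + \<xi> *\<^sub>R v + r *\<^sub>R w \<in> S" using sub[of \<xi> r] that \<xi> by simp
    from has_real_derivative_along_line[where S = S, OF dvw this] show ?thesis by simp
  qed
  obtain \<eta> where \<eta>: "0 < \<eta>" "\<eta> < h"
    "Fv ((x + \<xi> *\<^sub>R v) + h *\<^sub>R w) - Fv ((x + \<xi> *\<^sub>R v) + 0 *\<^sub>R w)
       = (h - 0) * Fvw ((x + \<xi> *\<^sub>R v) + \<eta> *\<^sub>R w)"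
    using MVT2[OF h, of "\<lambda>r. Fv ((x + \<xi> *\<^sub>R v) + r *\<^sub>R w)" "\<lambda>r. Fvw ((x + \<xi> *\<^sub>R v) + r *\<^sub>R w)"] ee
    by blast
  have "F (x + h *\<^sub>R v + h *\<^sub>R w) - F (x + h *\<^sub>R v) - F (x + h *\<^sub>R w) + F x
      = h * (Fv (x + \<xi> *\<^sub>R v + h *\<^sub>R w) - Fv (x + \<xi> *\<^sub>R v))"
    using \<xi>(3) by (simp add: add_ac)
  also have "\<dots> = h * h * Fvw (x + \<xi> *\<^sub>R v + \<eta> *\<^sub>R w)" using \<eta>(3) by simp
  finally show ?thesis using \<xi> \<eta> by blast
qed

lemma small_square_in_ball:
  fixes x v w :: "'a::real_normed_vector"
  assumes "d > 0"
  obtains h where "h > 0"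
    "\<And>s r. 0 \<le> s \<Longrightarrow> s \<le> h \<Longrightarrow> 0 \<le> r \<Longrightarrow> r \<le> h \<Longrightarrow> x + s *\<^sub>R v + r *\<^sub>R w \<in> ball x d"
proof
  define h where "h = d / (2 * (norm v + norm w + 1))"
  have den: "norm v + norm w + 1 > 0" using norm_ge_zero[of v] norm_ge_zero[of w] by linarith
  show "h > 0" using assms den by (simp add: h_def)
  have hb: "h * (norm v + norm w) < d"
  proof -
    have "h * (norm v + norm w) \<le> h * (norm v + norm w + 1)" using \<open>h > 0\<close> by simp
    also have "\<dots> = d / 2" unfolding h_def using den by (simp add: field_simps)
    finally show ?thesis using assms by simp
  qed
  fix s r assume sr: "0 \<le> s" "s \<le> h" "0 \<le> r" "r \<le> h"
  have "dist x (x + s *\<^sub>R v + r *\<^sub>R w) = norm (s *\<^sub>R v + r *\<^sub>R w)"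
    by (simp add: dist_norm norm_minus_commute add_ac)
  also have "\<dots> \<le> norm (s *\<^sub>R v) + norm (r *\<^sub>R w)" by (rule norm_triangle_ineq)
  also have "\<dots> = s * norm v + r * norm w" using sr by simp
  also have "\<dots> \<le> h * norm v + h * norm w" using sr by (intro add_mono mult_right_mono) auto
  finally show "x + s *\<^sub>R v + r *\<^sub>R w \<in> ball x d" using hb by (simp add: distrib_left)
qed

lemma mixed_derivatives_commute:
  fixes F Fv Fw Fvw Fwv :: "'a::real_normed_vector \<Rightarrow> real"
  assumes S: "open S" "x \<in> S"
    and dv: "\<And>y. y \<in> S \<Longrightarrow> ((\<lambda>s. F (y + s *\<^sub>R v)) has_real_derivative Fv y) (at 0)"
    and dw: "\<And>y. y \<in> S \<Longrightarrow> ((\<lambda>s. F (y + s *\<^sub>R w)) has_real_derivative Fw y) (at 0)"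
    and dvw: "\<And>y. y \<in> S \<Longrightarrow> ((\<lambda>s. Fv (y + s *\<^sub>R w)) has_real_derivative Fvw y) (at 0)"
    and dwv: "\<And>y. y \<in> S \<Longrightarrow> ((\<lambda>s. Fw (y + s *\<^sub>R v)) has_real_derivative Fwv y) (at 0)"
    and c1: "continuous_on S Fvw" and c2: "continuous_on S Fwv"
  shows "Fvw x = Fwv x"
proof (rule ccontr)
  assume ne: "Fvw x \<noteq> Fwv x"
  define e where "e = \<bar>Fvw x - Fwv x\<bar> / 2"
  have e: "e > 0" using ne by (simp add: e_def)
  obtain d1 where d1: "d1 > 0" "\<And>y. y \<in> S \<Longrightarrow> dist y x < d1 \<Longrightarrow> dist (Fvw y) (Fvw x) < e"
    using c1 S(2) e unfolding continuous_on_iff by blast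
  obtain d2 where d2: "d2 > 0" "\<And>y. y \<in> S \<Longrightarrow> dist y x < d2 \<Longrightarrow> dist (Fwv y) (Fwv x) < e"
    using c2 S(2) e unfolding continuous_on_iff by blast
  obtain d3 where d3: "d3 > 0" "ball x d3 \<subseteq> S" using S openE by blast
  define d where "d = min d1 (min d2 d3)"
  have "d > 0" using d1 d2 d3 by (simp add: d_def)
  then obtain h where h: "h > 0"
    and sq: "\<And>s r. 0 \<le> s \<Longrightarrow> s \<le> h \<Longrightarrow> 0 \<le> r \<Longrightarrow> r \<le> h \<Longrightarrow> x + s *\<^sub>R v + r *\<^sub>R w \<in> ball x d"
    using small_square_in_ball by metis
  have near: "p \<in> S" "dist p x < d1" "dist p x < d2" if "p \<in> ball x d" for p
    using that d3(2) by (auto simp: d_def dist_commute)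
  have swap: "x + s *\<^sub>R w + r *\<^sub>R v = x + r *\<^sub>R v + s *\<^sub>R w" for s r by (simp add: add_ac)
  have sub: "x + s *\<^sub>R v + r *\<^sub>R w \<in> S" "x + r *\<^sub>R w + s *\<^sub>R v \<in> S"
    if "0 \<le> s" "s \<le> h" "0 \<le> r" "r \<le> h" for s r
    using near(1)[OF sq[OF that]] unfolding swap by simp_all
  obtain \<xi> \<eta> where A: "0 < \<xi>" "\<xi> < h" "0 < \<eta>" "\<eta> < h"
    "F (x + h *\<^sub>R v + h *\<^sub>R w) - F (x + h *\<^sub>R v) - F (x + h *\<^sub>R w) + F x
       = h * h * Fvw (x + \<xi> *\<^sub>R v + \<eta> *\<^sub>R w)"
    using mixed_difference_mvt[OF dv dvw h sub(1)] by blast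
  obtain \<xi>' \<eta>' where B: "0 < \<xi>'" "\<xi>' < h" "0 < \<eta>'" "\<eta>' < h"
    "F (x + h *\<^sub>R w + h *\<^sub>R v) - F (x + h *\<^sub>R w) - F (x + h *\<^sub>R v) + F x
       = h * h * Fwv (x + \<xi>' *\<^sub>R w + \<eta>' *\<^sub>R v)"
    using mixed_difference_mvt[OF dw dwv h sub(2)] by blast
  have "h * h * Fvw (x + \<xi> *\<^sub>R v + \<eta> *\<^sub>R w) = h * h * Fwv (x + \<xi>' *\<^sub>R w + \<eta>' *\<^sub>R v)"
    using A(5) B(5) by (simp add: algebra_simps)
  then have eq: "Fvw (x + \<xi> *\<^sub>R v + \<eta> *\<^sub>R w) = Fwv (x + \<xi>' *\<^sub>R w + \<eta>' *\<^sub>R v)" using h by simp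
  have "dist (Fvw (x + \<xi> *\<^sub>R v + \<eta> *\<^sub>R w)) (Fvw x) < e"
    using d1(2) near sq[of \<xi> \<eta>] A by simp
  moreover have "dist (Fwv (x + \<xi>' *\<^sub>R w + \<eta>' *\<^sub>R v)) (Fwv x) < e"
    using d2(2) near sq[of \<eta>' \<xi>'] B unfolding swap by simp
  ultimately have "\<bar>Fvw x - Fwv x\<bar> < 2 * e" using eq by (simp add: dist_real_def)
  then show False by (simp add: e_def)
qed

lemma smooth_onD:
  assumes "smooth_on S F" "set vs \<subseteq> Basis"
  shows "continuous_on S (iter_dpart vs F)"
    and "v \<in> Basis \<Longrightarrow> x \<in> S \<Longrightarrow>
      ((\<lambda>s. iter_dpart vs F (x + s *\<^sub>R v)) has_vector_derivative dpart v (iter_dpart vs F) x) (at 0)"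
  using assms unfolding smooth_on_def by blast+

lemma smooth_on_dpart_commute:
  fixes F :: "'a::euclidean_space \<Rightarrow> 'b::euclidean_space"
  assumes S: "open S" "smooth_on S F" "x \<in> S" and v: "v \<in> Basis" and w: "w \<in> Basis"
  shows "dpart w (dpart v F) x = dpart v (dpart w F) x"
proof (rule euclidean_eqI)
  fix b :: 'b
  have inner: "((\<lambda>s. g s \<bullet> b) has_real_derivative (D \<bullet> b)) (at 0)"
    if "(g has_vector_derivative D) (at 0)" for g :: "real \<Rightarrow> 'b" and D
    using bounded_linear.has_vector_derivative[OF bounded_linear_inner_left that]
    by (simp add: has_real_derivative_iff_has_vector_derivative)
  have d0: "((\<lambda>s. F (y + s *\<^sub>R u)) has_vector_derivative dpart u F y) (at 0)"
    if "y \<in> S" "u \<in> Basis" for y u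
    using smooth_onD(2)[OF S(2), of "[]" u y] that by simp
  have d1: "((\<lambda>s. dpart u F (y + s *\<^sub>R u')) has_vector_derivative dpart u' (dpart u F) y) (at 0)"
    if "y \<in> S" "u \<in> Basis" "u' \<in> Basis" for y u u'
    using smooth_onD(2)[OF S(2), of "[u]" u' y] that by simp
  have c: "continuous_on S (\<lambda>y. dpart u' (dpart u F) y \<bullet> b)" if "u \<in> Basis" "u' \<in> Basis" for u u'
    using smooth_onD(1)[OF S(2), of "[u',u]"] that by (intro continuous_intros) simp_all
  show "dpart w (dpart v F) x \<bullet> b = dpart v (dpart w F) x \<bullet> b"
    by (rule mixed_derivatives_commute[OF S(1) S(3), where F="\<lambda>y. F y \<bullet> b" and v=v and w=w
         and Fv="\<lambda>y. dpart v F y \<bullet> b" and Fw="\<lambda>y. dpart w F y \<bullet> b"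
         and Fvw="\<lambda>y. dpart w (dpart v F) y \<bullet> b" and Fwv="\<lambda>y. dpart v (dpart w F) y \<bullet> b"])
       (use inner[OF d0] inner[OF d1] v w c in auto)
qed

lemma pd_eq_dpart: "pd i F = dpart (axis i 1) F"
  by (rule ext) (simp add: pd_def)

lemma smooth_on_has_partials2:
  fixes F :: "real^3 \<Rightarrow> 'b::euclidean_space"
  assumes "smooth_on S F"
  shows "has_partials2_on S F"
  unfolding has_partials2_on_def has_partials_on_def pd_eq_dpart
  using smooth_onD(2)[OF assms, of "[]"] smooth_onD(2)[OF assms, of "[axis _ 1]"] by simp

lemma smooth_on_pd_commute:
  fixes F :: "real^3 \<Rightarrow> 'b::euclidean_space"
  assumes "open S" "smooth_on S F" "x \<in> S"
  shows "pd i (pd j F) x = pd j (pd i F) x"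
  unfolding pd_eq_dpart using smooth_on_dpart_commute[OF assms, of "axis j 1" "axis i 1"] by simp

section \<open>Dirac matrices\<close>

lemma scaleR_complex: "r *\<^sub>R (z::complex) = complex_of_real r * z"
  by (rule scaleR_conv_of_real)

lemma bounded_bilinear_matrix_vector_mult:
  "bounded_bilinear (\<lambda>(A::complex^'n^'m) (v::complex^'n). A *v v)"
  unfolding bilinear_conv_bounded_bilinear[symmetric] bilinear_def
  by (auto simp: linear_iff matrix_vector_mult_def vec_eq_iff sum.distrib sum_distrib_left
      algebra_simps scaleR_complex)

lemma bounded_bilinear_matrix_matrix_mult:
  "bounded_bilinear (\<lambda>(A::complex^'n^'m) (B::complex^'k^'n). A ** B)"
  unfolding bilinear_conv_bounded_bilinear[symmetric] bilinear_def
  by (auto simp: linear_iff matrix_matrix_mult_def vec_eq_iff sum.distrib sum_distrib_left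
      algebra_simps scaleR_complex)

lemma bounded_linear_vector_smult: "bounded_linear (\<lambda>v::complex^'n. c *s v)"
  unfolding linear_conv_bounded_linear[symmetric]
  by (auto simp: linear_iff vec_eq_iff algebra_simps scaleR_complex)

lemmas bounded_linear_divide_scaleR =
  bounded_linear_compose[OF bounded_linear_scaleR_left bounded_linear_divide]

lemmas matrix_vector_mult_distribs =
  bounded_bilinear.add_left[OF bounded_bilinear_matrix_vector_mult]
  bounded_bilinear.add_right[OF bounded_bilinear_matrix_vector_mult]
  bounded_bilinear.diff_left[OF bounded_bilinear_matrix_vector_mult]
  bounded_bilinear.diff_right[OF bounded_bilinear_matrix_vector_mult]
  bounded_bilinear.sum_left[OF bounded_bilinear_matrix_vector_mult]
  bounded_bilinear.sum_right[OF bounded_bilinear_matrix_vector_mult]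
  bounded_bilinear.scaleR_left[OF bounded_bilinear_matrix_vector_mult]
  bounded_bilinear.scaleR_right[OF bounded_bilinear_matrix_vector_mult]
  bounded_bilinear.minus_left[OF bounded_bilinear_matrix_vector_mult]
  bounded_bilinear.minus_right[OF bounded_bilinear_matrix_vector_mult]

lemmas matrix_matrix_mult_distribs =
  bounded_bilinear.add_left[OF bounded_bilinear_matrix_matrix_mult]
  bounded_bilinear.add_right[OF bounded_bilinear_matrix_matrix_mult]
  bounded_bilinear.diff_left[OF bounded_bilinear_matrix_matrix_mult]
  bounded_bilinear.diff_right[OF bounded_bilinear_matrix_matrix_mult]
  bounded_bilinear.sum_left[OF bounded_bilinear_matrix_matrix_mult]
  bounded_bilinear.sum_right[OF bounded_bilinear_matrix_matrix_mult]
  bounded_bilinear.scaleR_left[OF bounded_bilinear_matrix_matrix_mult]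
  bounded_bilinear.scaleR_right[OF bounded_bilinear_matrix_matrix_mult]
  bounded_bilinear.minus_left[OF bounded_bilinear_matrix_matrix_mult]
  bounded_bilinear.minus_right[OF bounded_bilinear_matrix_matrix_mult]

lemma matrix_vector_mult_smult: "(A::complex^'n^'m) *v (c *s v) = c *s (A *v v)"
  by (simp add: vec_eq_iff matrix_vector_mult_def sum_distrib_left algebra_simps)

lemma vector_smult_sum: "(c::complex) *s (\<Sum>a\<in>A. v a) = (\<Sum>a\<in>A. c *s (v a :: complex^'n))"
  by (induction A rule: infinite_finite_induct) (simp_all add: vector_add_ldistrib)

lemma vector_smult_scaleR: "(c::complex) *s (r *\<^sub>R v) = r *\<^sub>R (c *s (v::complex^'n))"
  by (simp add: vec_eq_iff scaleR_complex algebra_simps)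

lemma scaleR_eq_vector_smult: "r *\<^sub>R (v::complex^'n) = complex_of_real r *s v"
  by (simp add: vec_eq_iff scaleR_complex)

lemmas vector_smult_distribs = matrix_vector_mult_smult vector_add_ldistrib vector_ssub_ldistrib
  vector_smult_rneg vector_smult_sum vector_smult_scaleR

lemma vector_4 [simp]:
  "(vector [x, y, z, w] :: ('a::zero)^4) $ 1 = x"
  "(vector [x, y, z, w] :: ('a::zero)^4) $ 2 = y"
  "(vector [x, y, z, w] :: ('a::zero)^4) $ 3 = z"
  "(vector [x, y, z, w] :: ('a::zero)^4) $ 4 = w"
  unfolding vector_def by simp_all

lemma matrix_eq_iff_4: "(A::complex^4^4) = B \<longleftrightarrow> (\<forall>i j. A$i$j = B$i$j)"
  by (simp add: vec_eq_iff)

lemma gamma_up_explicit: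
  "gamma_up 1 = vector [vector [0,0,0,1], vector [0,0,1,0], vector [0,-1,0,0], vector [-1,0,0,0]]"
  "gamma_up 2 = vector [vector [0,0,0,-\<i>], vector [0,0,\<i>,0], vector [0,\<i>,0,0], vector [-\<i>,0,0,0]]"
  "gamma_up 3 = vector [vector [0,0,1,0], vector [0,0,0,-1], vector [-1,0,0,0], vector [0,1,0,0]]"
  unfolding gamma_up_def gamma0_def alpha_def pauli_def lower_blk_def sub_idx_def matrix_eq_iff_4
  by (simp_all add: forall_4 matrix_matrix_mult_def sum_4)

lemma gamma_up_products:
  "gamma_up 1 ** gamma_up 1 = vector [vector [-1,0,0,0], vector [0,-1,0,0], vector [0,0,-1,0],
      vector [0,0,0,-1]]"
  "gamma_up 1 ** gamma_up 2 = vector [vector [-\<i>,0,0,0], vector [0,\<i>,0,0], vector [0,0,-\<i>,0],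
      vector [0,0,0,\<i>]]"
  "gamma_up 1 ** gamma_up 3 = vector [vector [0,1,0,0], vector [-1,0,0,0], vector [0,0,0,1],
      vector [0,0,-1,0]]"
  "gamma_up 2 ** gamma_up 1 = vector [vector [\<i>,0,0,0], vector [0,-\<i>,0,0], vector [0,0,\<i>,0],
      vector [0,0,0,-\<i>]]"
  "gamma_up 2 ** gamma_up 2 = vector [vector [-1,0,0,0], vector [0,-1,0,0], vector [0,0,-1,0],
      vector [0,0,0,-1]]"
  "gamma_up 2 ** gamma_up 3 = vector [vector [0,-\<i>,0,0], vector [-\<i>,0,0,0], vector [0,0,0,-\<i>],
      vector [0,0,-\<i>,0]]"
  "gamma_up 3 ** gamma_up 1 = vector [vector [0,-1,0,0], vector [1,0,0,0], vector [0,0,0,-1],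
      vector [0,0,1,0]]"
  "gamma_up 3 ** gamma_up 2 = vector [vector [0,\<i>,0,0], vector [\<i>,0,0,0], vector [0,0,0,\<i>],
      vector [0,0,\<i>,0]]"
  "gamma_up 3 ** gamma_up 3 = vector [vector [-1,0,0,0], vector [0,-1,0,0], vector [0,0,-1,0],
      vector [0,0,0,-1]]"
  unfolding gamma_up_explicit matrix_eq_iff_4 by (simp_all add: forall_4 matrix_matrix_mult_def sum_4)

definition gamma_comm :: "3 \<Rightarrow> 3 \<Rightarrow> complex^4^4" where
  "gamma_comm a b = gamma_low a ** gamma_low b - gamma_low b ** gamma_low a"

lemma gamma_comm_up: "gamma_comm a b = gamma_up a ** gamma_up b - gamma_up b ** gamma_up a"
proof -
  have "(- A) ** (- B) = A ** B" for A B :: "complex^4^4"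
    by (simp add: matrix_eq_iff_4 matrix_matrix_mult_def)
  then show ?thesis by (simp add: gamma_comm_def gamma_low_def eta_sp_def)
qed

lemma gamma_comm_explicit:
  "gamma_comm 1 1 = 0" "gamma_comm 2 2 = 0" "gamma_comm 3 3 = 0"
  "gamma_comm 1 2 = vector [vector [-(2*\<i>),0,0,0], vector [0,2*\<i>,0,0], vector [0,0,-(2*\<i>),0],
      vector [0,0,0,2*\<i>]]"
  "gamma_comm 1 3 = vector [vector [0,2,0,0], vector [-2,0,0,0], vector [0,0,0,2], vector [0,0,-2,0]]"
  "gamma_comm 2 1 = vector [vector [2*\<i>,0,0,0], vector [0,-(2*\<i>),0,0], vector [0,0,2*\<i>,0],
      vector [0,0,0,-(2*\<i>)]]"
  "gamma_comm 2 3 = vector [vector [0,-(2*\<i>),0,0], vector [-(2*\<i>),0,0,0], vector [0,0,0,-(2*\<i>)],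
      vector [0,0,-(2*\<i>),0]]"
  "gamma_comm 3 1 = vector [vector [0,-2,0,0], vector [2,0,0,0], vector [0,0,0,-2], vector [0,0,2,0]]"
  "gamma_comm 3 2 = vector [vector [0,2*\<i>,0,0], vector [2*\<i>,0,0,0], vector [0,0,0,2*\<i>],
      vector [0,0,2*\<i>,0]]"
  unfolding gamma_comm_up gamma_up_products matrix_eq_iff_4 by (simp_all add: forall_4)

lemma gamma_up_anticomm:
  "gamma_up a ** gamma_up b + gamma_up b ** gamma_up a = (if a = b then -2 else 0) *\<^sub>R mat 1"
  using exhaust_3[of a] exhaust_3[of b]
  by (auto simp: gamma_up_products matrix_eq_iff_4 forall_4 mat_def scaleR_complex)

lemma gamma0_square: "gamma0 ** gamma0 = mat 1"
  unfolding gamma0_def matrix_eq_iff_4 by (simp add: forall_4 matrix_matrix_mult_def sum_4 mat_def)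

lemma gamma0_anticomm: "gamma0 ** gamma_up a = - (gamma_up a ** gamma0)"
  using exhaust_3[of a]
  by (auto simp: gamma_up_explicit gamma0_def matrix_eq_iff_4 forall_4 matrix_matrix_mult_def sum_4)

lemma gamma0_comm_gamma_comm: "gamma0 ** gamma_comm a b = gamma_comm a b ** gamma0"
proof -
  have "gamma0 ** (gamma_up a ** gamma_up b) = (gamma_up a ** gamma_up b) ** gamma0" for a b
    by (simp add: matrix_mul_assoc gamma0_anticomm matrix_matrix_mult_distribs)
      (simp add: matrix_mul_assoc[symmetric] gamma0_anticomm matrix_matrix_mult_distribs)
  then show ?thesis by (simp add: gamma_comm_up matrix_matrix_mult_distribs)
qed

lemma gamma_comm_sum_commutator_gamma:
  "(\<Sum>a\<in>UNIV. \<Sum>b\<in>UNIV. x a b *\<^sub>R gamma_comm a b) ** gamma_up c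
     - gamma_up c ** (\<Sum>a\<in>UNIV. \<Sum>b\<in>UNIV. x a b *\<^sub>R gamma_comm a b)
   = (\<Sum>b\<in>UNIV. (4 * (x c b - x b c)) *\<^sub>R gamma_up b)"
  using exhaust_3[of c]
  by (auto simp: matrix_eq_iff_4 forall_4 matrix_matrix_mult_def sum_3 sum_4 gamma_comm_explicit
      gamma_up_explicit scaleR_complex algebra_simps)

text \<open>The spin generators close under commutators as the rotation algebra \<open>so(3)\<close>.\<close>
lemma gamma_comm_sum_commutator:
  assumes xa: "\<And>a b. x a b = - x b a" and ya: "\<And>a b. y a b = - y b a"
  shows "(\<Sum>a\<in>UNIV. \<Sum>b\<in>UNIV. x a b *\<^sub>R gamma_comm a b) ** (\<Sum>a\<in>UNIV. \<Sum>b\<in>UNIV. y a b *\<^sub>R gamma_comm a b)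
       - (\<Sum>a\<in>UNIV. \<Sum>b\<in>UNIV. y a b *\<^sub>R gamma_comm a b) ** (\<Sum>a\<in>UNIV. \<Sum>b\<in>UNIV. x a b *\<^sub>R gamma_comm a b)
   = (\<Sum>a\<in>UNIV. \<Sum>d\<in>UNIV. (-8 * (\<Sum>b\<in>UNIV. x a b * y b d - y a b * x b d)) *\<^sub>R gamma_comm a d)"
proof -
  have xs: "x 1 1 = 0" "x 2 2 = 0" "x 3 3 = 0" "x 2 1 = - x 1 2" "x 3 1 = - x 1 3" "x 3 2 = - x 2 3"
    using xa[of 1 1] xa[of 2 2] xa[of 3 3] xa[of 2 1] xa[of 3 1] xa[of 3 2] by simp_all
  have ys: "y 1 1 = 0" "y 2 2 = 0" "y 3 3 = 0" "y 2 1 = - y 1 2" "y 3 1 = - y 1 3" "y 3 2 = - y 2 3"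
    using ya[of 1 1] ya[of 2 2] ya[of 3 3] ya[of 2 1] ya[of 3 1] ya[of 3 2] by simp_all
  show ?thesis
    unfolding matrix_eq_iff_4 forall_4
    by (simp add: matrix_matrix_mult_def sum_3 sum_4 gamma_comm_explicit xs ys
        scaleR_complex algebra_simps)
qed

text \<open>For a tensor with the symmetries of the Riemann tensor, contraction with
  \<open>\<gamma>\<^sup>c \<gamma>\<^sup>d [\<gamma>\<^sub>a, \<gamma>\<^sub>b]\<close> leaves only its full trace.\<close>
lemma gamma_curvature_contraction:
  fixes W :: "3 \<Rightarrow> 3 \<Rightarrow> 3 \<Rightarrow> 3 \<Rightarrow> real"
  assumes aab: "\<And>a b c d. W c d a b = - W c d b a" and acd: "\<And>a b c d. W c d a b = - W d c a b"
    and bianchi: "\<And>a b c d. W c d a b + W d b a c + W b c a d = 0"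
  shows "(\<Sum>a\<in>UNIV. \<Sum>b\<in>UNIV. \<Sum>c\<in>UNIV. \<Sum>d\<in>UNIV.
            W c d a b *\<^sub>R (gamma_up c ** gamma_up d ** gamma_comm a b))
     = (-4 * (\<Sum>a\<in>UNIV. \<Sum>c\<in>UNIV. W a c a c)) *\<^sub>R mat 1"
proof -
  have diag: "W c c a b = 0" "W c d a a = 0" for a b c d
    using acd[of c c a b] aab[of c d a a] by simp_all
  have swap_cd: "W 2 1 a b = - W 1 2 a b" "W 3 1 a b = - W 1 3 a b" "W 3 2 a b = - W 2 3 a b" for a b
    using acd[of 1 2 a b] acd[of 1 3 a b] acd[of 2 3 a b] by simp_all
  have swap_ab: "W c d 2 1 = - W c d 1 2" "W c d 3 1 = - W c d 1 3" "W c d 3 2 = - W c d 2 3" for c d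
    using aab[of c d 2 1] aab[of c d 3 1] aab[of c d 3 2] by simp_all
  have pair: "W 1 3 1 2 = W 1 2 1 3" "W 2 3 1 2 = W 1 2 2 3" "W 2 3 1 3 = W 1 3 2 3"
    using bianchi[of 1 2 1 3] bianchi[of 1 2 2 3] bianchi[of 1 3 3 2]
    by (simp_all add: diag swap_cd swap_ab)
  show ?thesis
    unfolding sum_3 gamma_up_products gamma_comm_explicit matrix_eq_iff_4 forall_4
    by (simp add: matrix_matrix_mult_def sum_4 mat_def diag swap_cd swap_ab pair
        scaleR_complex complex_eq_iff)
qed

definition adj3 :: "real^3^3 \<Rightarrow> real^3^3" where
  "adj3 A = vector [vector [A$2$2 * A$3$3 - A$2$3 * A$3$2, A$3$2 * A$1$3 - A$3$3 * A$1$2, A$1$2 * A$2$3 - A$1$3 * A$2$2], vector [A$2$3 * A$3$1 - A$2$1 * A$3$3, A$3$3 * A$1$1 - A$3$1 * A$1$3, A$1$3 * A$2$1 - A$1$1 * A$2$3], vector [A$2$1 * A$3$2 - A$2$2 * A$3$1, A$3$1 * A$1$2 - A$3$2 * A$1$1, A$1$1 * A$2$2 - A$1$2 * A$2$1]]"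

lemma matrix_eq_iff_3: "(A::real^3^3) = B \<longleftrightarrow> (\<forall>i j. A$i$j = B$i$j)"
  by (simp add: vec_eq_iff)

lemma adj3: "A ** adj3 A = det A *\<^sub>R mat 1"
  unfolding matrix_eq_iff_3 forall_3
  by (simp add: adj3_def matrix_matrix_mult_def sum_3 det_3 mat_def algebra_simps)

lemma matrix_inv_props:
  fixes A :: "real^'n^'n"
  assumes "det A \<noteq> 0"
  shows "A ** matrix_inv A = mat 1" "matrix_inv A ** A = mat 1"
  using someI_ex[OF assms[folded invertible_det_nz, unfolded invertible_def]]
  unfolding matrix_inv_def by auto

lemma matrix_inv_unique:
  fixes A B :: "real^'n^'n"
  assumes AB: "A ** B = mat 1"
  shows "matrix_inv A = B"
proof -
  have "det A \<noteq> 0"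
    using AB invertible_det_nz invertible_def matrix_left_right_inverse by blast
  then have "matrix_inv A = matrix_inv A ** (A ** B)" using AB by simp
  also have "\<dots> = B" by (simp add: matrix_mul_assoc matrix_inv_props(2)[OF \<open>det A \<noteq> 0\<close>])
  finally show ?thesis .
qed

lemma matrix_inv_3: "det A \<noteq> 0 \<Longrightarrow> matrix_inv A = inverse (det A) *\<^sub>R adj3 A"
proof (rule matrix_inv_unique)
  assume d: "det A \<noteq> 0"
  have "A ** (inverse (det A) *\<^sub>R adj3 A) = inverse (det A) *\<^sub>R (A ** adj3 A)"
    by (simp add: matrix_eq_iff_3 matrix_matrix_mult_def sum_distrib_left algebra_simps)
  then show "A ** (inverse (det A) *\<^sub>R adj3 A) = mat 1" using d by (simp add: adj3)
qed

lemma sum_delta_mult: "(\<Sum>l\<in>(UNIV::3 set). (if m = l then 1 else 0) * (B l::real)) = B m"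
  by (simp add: if_distrib[of "\<lambda>z. z * _"] sum.delta cong: if_cong)

lemma sum_swap_mult: "(\<Sum>k\<in>(UNIV::3 set). a k * (c * (\<Sum>l\<in>(UNIV::3 set). b k l * d l)))
    = c * (\<Sum>l\<in>UNIV. (\<Sum>k\<in>UNIV. a k * b k l) * (d l::real))"
proof -
  have "(\<Sum>k\<in>(UNIV::3 set). a k * (c * (\<Sum>l\<in>(UNIV::3 set). b k l * d l)))
      = c * (\<Sum>k\<in>UNIV. \<Sum>l\<in>UNIV. a k * b k l * d l)"
    by (simp add: sum_distrib_left mult_ac)
  also have "\<dots> = c * (\<Sum>l\<in>UNIV. \<Sum>k\<in>UNIV. a k * b k l * d l)" by (subst sum.swap) simp
  also have "\<dots> = c * (\<Sum>l\<in>UNIV. (\<Sum>k\<in>UNIV. a k * b k l) * (d l::real))" by (simp add: sum_distrib_right)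
  finally show ?thesis .
qed

lemma sum_scaleR_sum: "(\<Sum>c\<in>(UNIV::3 set). r c *\<^sub>R (\<Sum>b\<in>(UNIV::3 set). s c b *\<^sub>R M b))
    = (\<Sum>b\<in>UNIV. (\<Sum>c\<in>UNIV. r c * s c b) *\<^sub>R (M b :: 'a::real_vector))"
proof -
  have "(\<Sum>c\<in>(UNIV::3 set). r c *\<^sub>R (\<Sum>b\<in>(UNIV::3 set). s c b *\<^sub>R M b))
      = (\<Sum>c\<in>UNIV. \<Sum>b\<in>UNIV. (r c * s c b) *\<^sub>R M b)"
    by (simp add: scaleR_sum_right)
  also have "\<dots> = (\<Sum>b\<in>UNIV. \<Sum>c\<in>UNIV. (r c * s c b) *\<^sub>R M b)" by (rule sum.swap)
  also have "\<dots> = (\<Sum>b\<in>UNIV. (\<Sum>c\<in>UNIV. r c * s c b) *\<^sub>R M b)" by (simp add: scaleR_sum_left)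
  finally show ?thesis .
qed

lemma sum_swap4: "(\<Sum>i\<in>A. \<Sum>j\<in>B. \<Sum>c\<in>C. \<Sum>d\<in>D. X i j c d)
    = (\<Sum>c\<in>C. \<Sum>d\<in>D. \<Sum>i\<in>A. \<Sum>j\<in>B. (X i j c d :: 'a::comm_monoid_add))"
proof -
  have "(\<Sum>i\<in>A. \<Sum>j\<in>B. \<Sum>c\<in>C. \<Sum>d\<in>D. X i j c d) = (\<Sum>i\<in>A. \<Sum>c\<in>C. \<Sum>j\<in>B. \<Sum>d\<in>D. X i j c d)"
    by (rule sum.cong[OF refl], rule sum.swap)
  also have "\<dots> = (\<Sum>i\<in>A. \<Sum>c\<in>C. \<Sum>d\<in>D. \<Sum>j\<in>B. X i j c d)"
    by (rule sum.cong[OF refl], rule sum.cong[OF refl], rule sum.swap)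
  also have "\<dots> = (\<Sum>c\<in>C. \<Sum>i\<in>A. \<Sum>d\<in>D. \<Sum>j\<in>B. X i j c d)" by (rule sum.swap)
  also have "\<dots> = (\<Sum>c\<in>C. \<Sum>d\<in>D. \<Sum>i\<in>A. \<Sum>j\<in>B. X i j c d)"
    by (rule sum.cong[OF refl], rule sum.swap)
  finally show ?thesis .
qed

lemma sum_rotate3: "(\<Sum>k\<in>A. \<Sum>i\<in>B. \<Sum>j\<in>C. X k i j) = (\<Sum>i\<in>B. \<Sum>j\<in>C. \<Sum>k\<in>A. (X k i j :: 'a::comm_monoid_add))"
proof -
  have "(\<Sum>k\<in>A. \<Sum>i\<in>B. \<Sum>j\<in>C. X k i j) = (\<Sum>i\<in>B. \<Sum>k\<in>A. \<Sum>j\<in>C. X k i j)" by (rule sum.swap)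
  also have "\<dots> = (\<Sum>i\<in>B. \<Sum>j\<in>C. \<Sum>k\<in>A. X k i j)" by (rule sum.cong[OF refl], rule sum.swap)
  finally show ?thesis .
qed

locale dreibein =
  fixes f :: "3 \<Rightarrow> 3 \<Rightarrow> real^3 \<Rightarrow> real" and \<Omega> :: "(real^3) set"
  assumes open_dom: "open \<Omega>" and smooth_f: "\<And>a i. smooth_on \<Omega> (f a i)"
    and det_f_nonzero: "\<And>x. x \<in> \<Omega> \<Longrightarrow> det (\<chi> a i. f a i x) \<noteq> 0"
begin

definition hinv_mat :: "real^3 \<Rightarrow> real^3^3" where
  "hinv_mat x = (\<chi> k l. hinv f k l x)"

lemma hinv_mat_eq: "hinv_mat x = transpose (\<chi> a i. f a i x) ** (\<chi> a i. f a i x)"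
  by (simp add: hinv_mat_def matrix_eq_iff_3 matrix_matrix_mult_def transpose_def hinv_def)

lemma det_hinv_mat: "x \<in> \<Omega> \<Longrightarrow> det (hinv_mat x) \<noteq> 0"
  unfolding hinv_mat_eq by (simp add: det_mul det_transpose det_f_nonzero)

lemma hinv_sym: "hinv f i j x = hinv f j i x"
  by (simp add: hinv_def mult.commute)

lemma hlow_hinv_mat: "hlow f i j x = matrix_inv (hinv_mat x) $ i $ j"
  by (simp add: hlow_def hinv_mat_def)

lemma hlow_hinv: "x \<in> \<Omega> \<Longrightarrow> (\<Sum>k\<in>UNIV. hlow f i k x * hinv f k j x) = (if i = j then 1 else 0)"
  using matrix_inv_props(2)[OF det_hinv_mat, of x] unfolding matrix_eq_iff_3
  by (auto simp: matrix_matrix_mult_def hlow_hinv_mat mat_def hinv_mat_def)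

lemma hlow_sym:
  assumes x: "x \<in> \<Omega>"
  shows "hlow f i j x = hlow f j i x"
proof -
  have tH: "transpose (hinv_mat x) = hinv_mat x" by (simp add: hinv_mat_def transpose_def matrix_eq_iff_3
      hinv_sym)
  have "hinv_mat x ** transpose (matrix_inv (hinv_mat x)) = mat 1"
    using matrix_inv_props(2)[OF det_hinv_mat[OF x]]
        matrix_transpose_mul[of "matrix_inv (hinv_mat x)" "hinv_mat x"] tH
    by (metis transpose_mat)
  then have "matrix_inv (hinv_mat x) = transpose (matrix_inv (hinv_mat x))" by (rule matrix_inv_unique)
  then have "matrix_inv (hinv_mat x) $ i $ j = transpose (matrix_inv (hinv_mat x)) $ i $ j" by simp
  then show ?thesis by (simp add: hlow_hinv_mat transpose_def)
qed

lemma has_partials2_f: "has_partials2_on \<Omega> (f a i)"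
  by (rule smooth_on_has_partials2[OF smooth_f])

lemmas has_partials_f = has_partials2_onD(1)[OF has_partials2_f]
lemmas has_partials_pd_f = has_partials2_onD(2)[OF has_partials2_f]

lemma has_partials2_hinv: "has_partials2_on \<Omega> (hinv f i j)"
proof -
  have "has_partials2_on \<Omega> (\<lambda>x. \<Sum>a\<in>UNIV. f a i x * f a j x)"
    by (intro has_partials2_on_sum has_partials2_on_mult open_dom has_partials2_f) auto
  then show ?thesis by (simp add: hinv_def[abs_def])
qed

lemmas has_partials_hinv = has_partials2_onD(1)[OF has_partials2_hinv]

lemma has_partials2_hinv_mat: "has_partials2_on \<Omega> (\<lambda>x. hinv_mat x $ k $ l)"
  using has_partials2_hinv by (simp add: hinv_mat_def)

lemma has_partials2_det_hinv_mat: "has_partials2_on \<Omega> (\<lambda>x. det (hinv_mat x))"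
  unfolding det_3 by (intro has_partials2_on_add has_partials2_on_diff has_partials2_on_mult
      has_partials2_hinv_mat open_dom)

lemma has_partials2_adj3_hinv_mat: "has_partials2_on \<Omega> (\<lambda>x. adj3 (hinv_mat x) $ i $ j)"
  using exhaust_3[of i] exhaust_3[of j]
  by (elim disjE; simp add: adj3_def; intro has_partials2_on_diff has_partials2_on_mult
      has_partials2_hinv_mat open_dom)

lemma has_partials2_hlow: "has_partials2_on \<Omega> (hlow f i j)"
proof (rule has_partials2_on_cong[OF open_dom])
  show "has_partials2_on \<Omega> (\<lambda>x. inverse (det (hinv_mat x)) * adj3 (hinv_mat x) $ i $ j)"
    by (intro has_partials2_on_mult has_partials2_on_inverse has_partials2_det_hinv_mat
        has_partials2_adj3_hinv_mat open_dom det_hinv_mat)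
  show "inverse (det (hinv_mat y)) * adj3 (hinv_mat y) $ i $ j = hlow f i j y" if "y \<in> \<Omega>" for y
    using det_hinv_mat[OF that] by (simp add: hlow_hinv_mat matrix_inv_3)
qed

lemmas has_partials_hlow = has_partials2_onD(1)[OF has_partials2_hlow]
lemmas has_partials_pd_hlow = has_partials2_onD(2)[OF has_partials2_hlow]

lemma f_co_eq: "f_co f a j x = (\<Sum>k\<in>UNIV. hlow f j k x * f a k x)"
  by (simp add: f_co_def gsp_def eta_sp_def sum_negf)

lemma sum_f_f_co:
  assumes x: "x \<in> \<Omega>"
  shows "(\<Sum>a\<in>UNIV. f a i x * f_co f a j x) = (if i = j then 1 else 0)"
proof -
  have "(\<Sum>a\<in>UNIV. f a i x * f_co f a j x) = (\<Sum>k\<in>UNIV. hlow f j k x * hinv f k i x)"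
    by (simp add: f_co_eq hinv_def sum_3 algebra_simps)
  also have "\<dots> = (if i = j then 1 else 0)" using hlow_hinv[OF x, of j i] by auto
  finally show ?thesis .
qed

lemma sum_f_co_f:
  assumes x: "x \<in> \<Omega>"
  shows "(\<Sum>j\<in>UNIV. f_co f a j x * f b j x) = (if a = b then 1 else 0)"
proof -
  define Co where "Co = (\<chi> a j. f_co f a j x)"
  define Fm where "Fm = (\<chi> a i. f a i x)"
  have "transpose Fm ** Co = mat 1"
    unfolding matrix_eq_iff_3 using sum_f_f_co[OF x] by (simp add: Co_def Fm_def matrix_matrix_mult_def
        transpose_def mat_def)
  then have "Co ** transpose Fm = mat 1" using matrix_left_right_inverse by blast
  then show ?thesis unfolding matrix_eq_iff_3
    by (simp add: Co_def Fm_def matrix_matrix_mult_def transpose_def mat_def)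
qed

lemma has_partials2_f_co: "has_partials2_on \<Omega> (f_co f a j)"
proof (rule has_partials2_on_cong[OF open_dom])
  show "has_partials2_on \<Omega> (\<lambda>x. \<Sum>k\<in>UNIV. hlow f j k x * f a k x)"
    by (intro has_partials2_on_sum has_partials2_on_mult has_partials2_hlow has_partials2_f open_dom)
        auto
qed (simp add: f_co_eq)

lemmas has_partials_f_co = has_partials2_onD(1)[OF has_partials2_f_co]

lemma pd_hlow_sym: "x \<in> \<Omega> \<Longrightarrow> pd i (hlow f m k) x = pd i (hlow f k m) x"
  by (rule pd_cong[OF open_dom]) (auto intro: hlow_sym)

lemma chr_sym: "x \<in> \<Omega> \<Longrightarrow> chr f k i j x = chr f k j i x"
  by (simp add: chr_def pd_hlow_sym[of x] algebra_simps)

lemma hlow_chr: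
  assumes x: "x \<in> \<Omega>"
  shows "(\<Sum>k\<in>UNIV. hlow f m k x * chr f k i j x)
    = (1/2) * (pd i (hlow f m j) x + pd j (hlow f m i) x - pd m (hlow f i j) x)"
proof -
  have "(\<Sum>k\<in>UNIV. hlow f m k x * chr f k i j x) = (1/2) * (\<Sum>l\<in>UNIV. (\<Sum>k\<in>UNIV. hlow f m k x *
      hinv f k l x) *
     (pd i (hlow f l j) x + pd j (hlow f l i) x - pd l (hlow f i j) x))"
    unfolding chr_def by (rule sum_swap_mult)
  also have "\<dots> = (1/2) * (pd i (hlow f m j) x + pd j (hlow f m i) x - pd m (hlow f i j) x)"
    by (simp add: hlow_hinv[OF x] sum_delta_mult)
  finally show ?thesis .
qed

lemma has_partials_chr: "has_partials_on \<Omega> (chr f k i j)"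
proof -
  have "has_partials_on \<Omega> (\<lambda>x. 1 / 2 * (\<Sum>l\<in>UNIV. hinv f k l x * (pd i (hlow f l j) x
      + pd j (hlow f l i) x - pd l (hlow f i j) x)))"
    by (intro has_partials_on_mult has_partials_on_const has_partials_on_sum has_partials_on_add
        has_partials_on_diff has_partials_pd_hlow has_partials_hinv) auto
  then show ?thesis by (simp add: chr_def[abs_def])
qed

lemma pd_chr_sym: "x \<in> \<Omega> \<Longrightarrow> pd l (chr f k i j) x = pd l (chr f k j i) x"
  by (rule pd_cong[OF open_dom]) (auto intro: chr_sym)

section \<open>Connection coefficients and curvature\<close>

text \<open>\<open>cov_frame i b j = \<nabla>\<^sub>i f\<^sub>b\<^sup>j\<close> and \<open>conn i a b = \<omega>\<^sub>i\<^sup>a\<^sup>b = f\<^sup>a\<^sub>j \<nabla>\<^sub>i f\<^sub>b\<^sup>j\<close>, which is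
  \<open>-\<alpha>\<^sub>i\<^sup>a\<^sup>b\<close> (lemma \<open>alpha_conn_eq\<close>).\<close>
definition cov_frame :: "3 \<Rightarrow> 3 \<Rightarrow> 3 \<Rightarrow> real^3 \<Rightarrow> real" where
  "cov_frame i b j x = pd i (f b j) x + (\<Sum>k\<in>UNIV. chr f j i k x * f b k x)"

definition conn :: "3 \<Rightarrow> 3 \<Rightarrow> 3 \<Rightarrow> real^3 \<Rightarrow> real" where
  "conn i a b x = (\<Sum>j\<in>UNIV. f_co f a j x * cov_frame i b j x)"

lemma pd_f_up:
  assumes x: "x \<in> \<Omega>"
  shows "pd i (f_up f j b) x = - pd i (f b j) x"
proof -
  have "f_up f j b = (\<lambda>x. - f b j x)" by (simp add: f_up_def[abs_def] eta_sp_def)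
  then show ?thesis using pd_minus[OF has_partials_f x] by simp
qed

lemma alpha_conn_eq: "x \<in> \<Omega> \<Longrightarrow> alpha_conn f i a b x = - conn i a b x"
  by (simp add: alpha_conn_def conn_def cov_frame_def pd_f_up f_up_def eta_sp_def sum_distrib_left
      sum.distrib sum_negf algebra_simps)

lemma has_partials_conn: "has_partials_on \<Omega> (conn i a b)"
proof -
  have "has_partials_on \<Omega> (\<lambda>x. \<Sum>j\<in>UNIV. f_co f a j x * (pd i (f b j) x
      + (\<Sum>k\<in>UNIV. chr f j i k x * f b k x)))"
    by (intro has_partials_on_sum has_partials_on_mult has_partials_on_add has_partials_f_co
        has_partials_pd_f has_partials_f has_partials_chr) auto
  then show ?thesis by (simp add: conn_def[abs_def] cov_frame_def)
qed

lemma f_co_chr_f: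
  assumes x: "x \<in> \<Omega>"
  shows "(\<Sum>j\<in>UNIV. f_co f a j x * (\<Sum>k\<in>UNIV. chr f j i k x * f b k x))
   = (\<Sum>m\<in>UNIV. \<Sum>k\<in>UNIV. f a m x * f b k x * ((1/2) * (pd i (hlow f m k) x + pd k (hlow f m i) x
       - pd m (hlow f i k) x)))"
proof -
  have "(\<Sum>j\<in>UNIV. f_co f a j x * (\<Sum>k\<in>UNIV. chr f j i k x * f b k x))
     = (\<Sum>m\<in>UNIV. \<Sum>k\<in>UNIV. f a m x * f b k x * (\<Sum>j\<in>UNIV. hlow f m j x * chr f j i k x))"
    by (simp add: f_co_eq sum_3 hlow_sym[OF x] algebra_simps)
  then show ?thesis by (simp add: hlow_chr[OF x])
qed

lemma pd_f_co_hlow: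
  assumes x: "x \<in> \<Omega>"
  shows "pd i (f_co f a j) x = (\<Sum>m\<in>UNIV. hlow f j m x * pd i (f a m) x + pd i (hlow f j m) x * f a m x)"
proof -
  have "pd i (f_co f a j) x = pd i (\<lambda>y. \<Sum>m\<in>UNIV. hlow f j m y * f a m y) x"
    by (rule pd_cong[OF open_dom x]) (simp add: f_co_eq)
  also have "\<dots> = (\<Sum>m\<in>UNIV. pd i (\<lambda>y. hlow f j m y * f a m y) x)"
    by (rule pd_sum) (auto intro: has_partials_on_mult has_partials_hlow has_partials_f x)
  also have "\<dots> = (\<Sum>m\<in>UNIV. hlow f j m x * pd i (f a m) x + pd i (hlow f j m) x * f a m x)"
    by (rule sum.cong[OF refl]) (rule pd_mult[OF has_partials_hlow has_partials_f x])
  finally show ?thesis .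
qed

lemma sum_pd_f_co_f:
  assumes x: "x \<in> \<Omega>"
  shows "(\<Sum>j\<in>UNIV. f_co f a j x * pd i (f b j) x + pd i (f_co f a j) x * f b j x) = 0"
proof -
  have "pd i (\<lambda>y. \<Sum>j\<in>UNIV. f_co f a j y * f b j y) x = pd i (\<lambda>y. if a = b then 1 else (0::real)) x"
    by (rule pd_cong[OF open_dom x]) (simp add: sum_f_co_f)
  then have Q0: "pd i (\<lambda>y. \<Sum>j\<in>UNIV. f_co f a j y * f b j y) x = 0" by (simp add: pd_const)
  have "pd i (\<lambda>y. \<Sum>j\<in>UNIV. f_co f a j y * f b j y) x = (\<Sum>j\<in>UNIV. pd i (\<lambda>y. f_co f a j y * f b j y) x)"
    by (rule pd_sum) (auto intro: has_partials_on_mult has_partials_f_co has_partials_f x)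
  also have "\<dots> = (\<Sum>j\<in>UNIV. f_co f a j x * pd i (f b j) x + pd i (f_co f a j) x * f b j x)"
    by (rule sum.cong[OF refl]) (rule pd_mult[OF has_partials_f_co has_partials_f x])
  finally show ?thesis using Q0 by simp
qed

lemma conn_antisym:
  assumes x: "x \<in> \<Omega>"
  shows "conn i a b x = - conn i b a x"
proof -
  have "conn i a b x + conn i b a x = (\<Sum>j\<in>UNIV. f_co f a j x * pd i (f b j) x
      + pd i (f_co f a j) x * f b j x)"
    unfolding conn_def cov_frame_def distrib_left sum.distrib f_co_chr_f[OF x] pd_f_co_hlow[OF x]
    by (simp add: f_co_eq sum_3 hlow_sym[OF x] pd_hlow_sym[OF x] algebra_simps)
  then show ?thesis using sum_pd_f_co_f[OF x] by simp
qed

lemma pd_f_co_frame: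
  assumes x: "x \<in> \<Omega>"
  shows "pd i (f_co f a m) x
   = - (\<Sum>c\<in>UNIV. \<Sum>n\<in>UNIV. f_co f a n x * pd i (f c n) x * f_co f c m x)"
proof -
  have "pd i (f_co f a m) x = (\<Sum>n\<in>UNIV. (if n = m then 1 else 0) * pd i (f_co f a n) x)"
    by (simp add: if_distrib[of "\<lambda>z. z * _"] sum.delta sum.delta' cong: if_cong)
  also have "\<dots> = (\<Sum>n\<in>UNIV. (\<Sum>c\<in>UNIV. f c n x * f_co f c m x) * pd i (f_co f a n) x)"
    by (simp add: sum_f_f_co[OF x])
  also have "\<dots> = (\<Sum>c\<in>UNIV. (\<Sum>n\<in>UNIV. pd i (f_co f a n) x * f c n x) * f_co f c m x)"
    by (simp add: sum_3 algebra_simps)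
  also have "\<dots> = (\<Sum>c\<in>UNIV. (- (\<Sum>n\<in>UNIV. f_co f a n x * pd i (f c n) x)) * f_co f c m x)"
  proof (rule sum.cong[OF refl])
    fix c
    have "(\<Sum>n\<in>UNIV. pd i (f_co f a n) x * f c n x) = - (\<Sum>n\<in>UNIV. f_co f a n x * pd i (f c n) x)"
      using sum_pd_f_co_f[OF x, of a i c] by (simp add: sum.distrib eq_neg_iff_add_eq_0 add.commute)
    then show "(\<Sum>n\<in>UNIV. pd i (f_co f a n) x * f c n x) * f_co f c m x
        = (- (\<Sum>n\<in>UNIV. f_co f a n x * pd i (f c n) x)) * f_co f c m x"
      by simp
  qed
  also have "\<dots> = - (\<Sum>c\<in>UNIV. \<Sum>n\<in>UNIV. f_co f a n x * pd i (f c n) x * f_co f c m x)"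
    by (simp add: sum_3 algebra_simps)
  finally show ?thesis .
qed

lemma has_partials_cov_frame: "has_partials_on \<Omega> (cov_frame j b m)"
proof -
  have "has_partials_on \<Omega> (\<lambda>x. pd j (f b m) x + (\<Sum>k\<in>UNIV. chr f m j k x * f b k x))"
    by (intro has_partials_on_add has_partials_on_sum has_partials_on_mult has_partials_pd_f
        has_partials_f has_partials_chr) auto
  then show ?thesis by (simp add: cov_frame_def[abs_def])
qed

lemma pd_cov_frame:
  assumes x: "x \<in> \<Omega>"
  shows "pd i (cov_frame j b m) x = pd i (pd j (f b m)) x
    + (\<Sum>l\<in>UNIV. chr f m j l x * pd i (f b l) x + pd i (chr f m j l) x * f b l x)"
proof -
  have e: "cov_frame j b m = (\<lambda>x. pd j (f b m) x + (\<Sum>k\<in>UNIV. chr f m j k x * f b k x))"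
    by (simp add: cov_frame_def[abs_def])
  have s: "has_partials_on \<Omega> (\<lambda>x. \<Sum>k\<in>UNIV. chr f m j k x * f b k x)"
    by (intro has_partials_on_sum has_partials_on_mult has_partials_f has_partials_chr) auto
  have "pd i (cov_frame j b m) x = pd i (pd j (f b m)) x + pd i (\<lambda>x. \<Sum>k\<in>UNIV. chr f m j k x * f b k x) x"
    unfolding e by (rule pd_add[OF has_partials_pd_f s x])
  also have "pd i (\<lambda>x. \<Sum>k\<in>UNIV. chr f m j k x * f b k x) x
      = (\<Sum>k\<in>UNIV. pd i (\<lambda>x. chr f m j k x * f b k x) x)"
    by (rule pd_sum) (auto intro: has_partials_on_mult has_partials_f has_partials_chr x)
  also have "\<dots> = (\<Sum>l\<in>UNIV. chr f m j l x * pd i (f b l) x + pd i (chr f m j l) x * f b l x)"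
    by (rule sum.cong[OF refl]) (rule pd_mult[OF has_partials_chr has_partials_f x])
  finally show ?thesis .
qed

lemma pd_conn:
  assumes x: "x \<in> \<Omega>"
  shows "pd i (conn j a b) x = (\<Sum>m\<in>UNIV. f_co f a m x * pd i (cov_frame j b m) x
      + pd i (f_co f a m) x * cov_frame j b m x)"
proof -
  have "pd i (conn j a b) x = (\<Sum>m\<in>UNIV. pd i (\<lambda>x. f_co f a m x * cov_frame j b m x) x)"
    unfolding conn_def[abs_def] by (rule pd_sum) (auto intro: has_partials_on_mult has_partials_f_co
        has_partials_cov_frame x)
  also have "\<dots> = (\<Sum>m\<in>UNIV. f_co f a m x * pd i (cov_frame j b m) x
      + pd i (f_co f a m) x * cov_frame j b m x)"
    by (rule sum.cong[OF refl]) (rule pd_mult[OF has_partials_f_co has_partials_cov_frame x])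
  finally show ?thesis .
qed

lemma f_co_cov_frame_chr:
  assumes x: "x \<in> \<Omega>"
  shows "(\<Sum>c\<in>UNIV. f_co f c m x * (cov_frame i c n x - pd i (f c n) x)) = chr f n i m x"
proof -
  have "(\<Sum>c\<in>UNIV. f_co f c m x * (cov_frame i c n x - pd i (f c n) x))
      = (\<Sum>l\<in>UNIV. (\<Sum>c\<in>UNIV. f c l x * f_co f c m x) * chr f n i l x)"
    by (simp add: cov_frame_def sum_3 algebra_simps)
  also have "\<dots> = chr f n i m x" by (simp add: sum_f_f_co[OF x]
      if_distrib[of "\<lambda>z. z * _"] sum.delta sum.delta' cong: if_cong)
  finally show ?thesis .
qed

text \<open>\<open>conn_curv i j a b\<close> is the curvature of \<open>\<omega>\<close> and \<open>riem m k i j = R\<^sup>m\<^sub>k\<^sub>i\<^sub>j\<close>.\<close>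
definition conn_curv :: "3 \<Rightarrow> 3 \<Rightarrow> 3 \<Rightarrow> 3 \<Rightarrow> real^3 \<Rightarrow> real" where
  "conn_curv i j a b x = pd i (conn j a b) x - pd j (conn i a b) x
      + (\<Sum>d\<in>UNIV. conn i a d x * conn j d b x - conn j a d x * conn i d b x)"

definition riem :: "3 \<Rightarrow> 3 \<Rightarrow> 3 \<Rightarrow> 3 \<Rightarrow> real^3 \<Rightarrow> real" where
  "riem m k i j x = pd i (chr f m j k) x - pd j (chr f m i k) x
   + (\<Sum>n\<in>UNIV. chr f m i n x * chr f n j k x - chr f m j n x * chr f n i k x)"

lemma pd_f_co_cov_frame:
  assumes x: "x \<in> \<Omega>"
  shows "(\<Sum>m\<in>UNIV. pd i (f_co f a m) x * cov_frame j b m x) + (\<Sum>d\<in>UNIV. conn i a d x * conn j d b x)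
   = (\<Sum>m\<in>UNIV. \<Sum>n\<in>UNIV. f_co f a n x * cov_frame j b m x * chr f n i m x)"
proof -
  have "(\<Sum>m\<in>UNIV. pd i (f_co f a m) x * cov_frame j b m x) + (\<Sum>d\<in>UNIV. conn i a d x * conn j d b x)
     = (\<Sum>m\<in>UNIV. \<Sum>n\<in>UNIV. f_co f a n x * cov_frame j b m x * (\<Sum>c\<in>UNIV. f_co f c m x * (cov_frame i c n x
         - pd i (f c n) x)))"
    unfolding pd_f_co_frame[OF x] conn_def by (simp add: sum_3 algebra_simps)
  then show ?thesis by (simp add: f_co_cov_frame_chr[OF x])
qed

lemma conn_curv_eq_riem:
  assumes x: "x \<in> \<Omega>"
  shows "conn_curv i j a b x = (\<Sum>m\<in>UNIV. \<Sum>k\<in>UNIV. f_co f a m x * f b k x * riem m k i j x)"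
proof -
  have sw: "pd i (pd j (f b m)) x = pd j (pd i (f b m)) x" for m
    by (rule smooth_on_pd_commute[OF open_dom smooth_f x])
  have "conn_curv i j a b x = ((\<Sum>m\<in>UNIV. pd i (f_co f a m) x * cov_frame j b m x)
      + (\<Sum>d\<in>UNIV. conn i a d x * conn j d b x))
      - ((\<Sum>m\<in>UNIV. pd j (f_co f a m) x * cov_frame i b m x) + (\<Sum>d\<in>UNIV. conn j a d x * conn i d b x))
      + (\<Sum>m\<in>UNIV. f_co f a m x * (pd i (cov_frame j b m) x - pd j (cov_frame i b m) x))"
    unfolding conn_curv_def pd_conn[OF x] by (simp add: sum.distrib sum_subtractf algebra_simps)
  also have "\<dots> = (\<Sum>m\<in>UNIV. \<Sum>k\<in>UNIV. f_co f a m x * f b k x * riem m k i j x)"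
    unfolding pd_f_co_cov_frame[OF x] pd_cov_frame[OF x] sw
    by (simp add: riem_def cov_frame_def sum_3 algebra_simps)
  finally show ?thesis .
qed

definition spin_conn :: "3 \<Rightarrow> real^3 \<Rightarrow> complex^4^4" where
  "spin_conn j x = (\<Sum>a\<in>UNIV. \<Sum>b\<in>UNIV. (alpha_conn f j a b x / 8) *\<^sub>R gamma_comm a b)"

definition gamma_curved :: "3 \<Rightarrow> real^3 \<Rightarrow> complex^4^4" where
  "gamma_curved j x = (\<Sum>a\<in>UNIV. f a j x *\<^sub>R gamma_up a)"

lemma Dsp_eq: "Dsp f j U x = pd j U x + spin_conn j x *v U x"
  by (simp add: Dsp_def spin_conn_def gamma_comm_def)

lemma spin_conn_commutator_gamma:
  assumes x: "x \<in> \<Omega>"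
  shows "spin_conn i x ** gamma_up c - gamma_up c ** spin_conn i x
      = (\<Sum>b\<in>UNIV. (- conn i c b x) *\<^sub>R gamma_up b)"
proof -
  have "spin_conn i x ** gamma_up c - gamma_up c ** spin_conn i x
      = (\<Sum>b\<in>UNIV. (4 * (alpha_conn f i c b x / 8 - alpha_conn f i b c x / 8)) *\<^sub>R gamma_up b)"
    unfolding spin_conn_def by (rule gamma_comm_sum_commutator_gamma)
  also have "\<dots> = (\<Sum>b\<in>UNIV. (- conn i c b x) *\<^sub>R gamma_up b)"
    using conn_antisym[OF x, of i _ c] by (simp add: alpha_conn_eq[OF x])
  finally show ?thesis .
qed

lemma sum_f_conn:
  assumes x: "x \<in> \<Omega>"
  shows "(\<Sum>c\<in>UNIV. f c j x * conn i c b x) = cov_frame i b j x"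
proof -
  have "(\<Sum>c\<in>UNIV. f c j x * conn i c b x) = (\<Sum>l\<in>UNIV. (\<Sum>c\<in>UNIV. f c j x * f_co f c l x) *
      cov_frame i b l x)"
    by (simp add: conn_def sum_3 algebra_simps)
  also have "\<dots> = cov_frame i b j x"
    by (simp add: sum_f_f_co[OF x] if_distrib[of "\<lambda>z. z * _"] sum.delta sum.delta' cong: if_cong)
  finally show ?thesis .
qed

lemma pd_gamma_curved:
  assumes x: "x \<in> \<Omega>"
  shows "pd i (gamma_curved j) x = (\<Sum>a\<in>UNIV. pd i (f a j) x *\<^sub>R gamma_up a)"
proof -
  have "pd i (gamma_curved j) x = (\<Sum>a\<in>UNIV. pd i (\<lambda>x. f a j x *\<^sub>R gamma_up a) x)"
    unfolding gamma_curved_def[abs_def]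
    by (rule pd_sum) (auto intro: has_partials_on_linear[OF bounded_linear_scaleR_left] has_partials_f x)
  also have "\<dots> = (\<Sum>a\<in>UNIV. pd i (f a j) x *\<^sub>R gamma_up a)"
    by (rule sum.cong[OF refl]) (rule pd_linear[OF bounded_linear_scaleR_left has_partials_f x])
  finally show ?thesis .
qed

lemma has_partials_gamma_curved: "has_partials_on \<Omega> (gamma_curved j)"
  unfolding gamma_curved_def[abs_def]
  by (rule has_partials_on_sum) (auto intro: has_partials_on_linear[OF bounded_linear_scaleR_left]
      has_partials_f)

lemma gamma_curved_parallel:
  assumes x: "x \<in> \<Omega>"
  shows "pd i (gamma_curved j) x + (spin_conn i x ** gamma_curved j x - gamma_curved j x
      ** spin_conn i x) = - (\<Sum>k\<in>UNIV. chr f j i k x *\<^sub>R gamma_curved k x)"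
proof -
  have "spin_conn i x ** gamma_curved j x - gamma_curved j x ** spin_conn i x
      = (\<Sum>c\<in>UNIV. f c j x *\<^sub>R (spin_conn i x ** gamma_up c - gamma_up c ** spin_conn i x))"
    unfolding gamma_curved_def by (simp add: matrix_matrix_mult_distribs sum_subtractf scaleR_diff_right)
  also have "\<dots> = (\<Sum>c\<in>UNIV. f c j x *\<^sub>R (\<Sum>b\<in>UNIV. (- conn i c b x) *\<^sub>R gamma_up b))"
    by (simp add: spin_conn_commutator_gamma[OF x])
  also have "\<dots> = (\<Sum>b\<in>UNIV. (\<Sum>c\<in>UNIV. f c j x * (- conn i c b x)) *\<^sub>R gamma_up b)"
      by (rule sum_scaleR_sum)
  also have "\<dots> = (\<Sum>b\<in>UNIV. (- cov_frame i b j x) *\<^sub>R gamma_up b)"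
    by (rule sum.cong[OF refl]) (simp add: sum_f_conn[OF x, symmetric] sum_negf)
  finally have A: "spin_conn i x ** gamma_curved j x - gamma_curved j x ** spin_conn i x
      = (\<Sum>b\<in>UNIV. (- cov_frame i b j x) *\<^sub>R gamma_up b)" .
  have "pd i (gamma_curved j) x + (spin_conn i x ** gamma_curved j x - gamma_curved j x ** spin_conn i x)
      = (\<Sum>b\<in>UNIV. (pd i (f b j) x - cov_frame i b j x) *\<^sub>R gamma_up b)"
    unfolding A pd_gamma_curved[OF x] by (simp add: sum.distrib[symmetric] scaleR_left_diff_distrib)
  also have "\<dots> = (\<Sum>b\<in>UNIV. (\<Sum>k\<in>UNIV. (- chr f j i k x) * f b k x) *\<^sub>R gamma_up b)"
    by (rule sum.cong[OF refl]) (simp add: cov_frame_def sum_negf)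
  also have "\<dots> = (\<Sum>k\<in>UNIV. (- chr f j i k x) *\<^sub>R (\<Sum>b\<in>UNIV. f b k x *\<^sub>R gamma_up b))"
    by (rule sum_scaleR_sum[symmetric])
  also have "\<dots> = - (\<Sum>k\<in>UNIV. chr f j i k x *\<^sub>R gamma_curved k x)"
    by (simp add: gamma_curved_def sum_negf)
  finally show ?thesis .
qed

lemma pd_alpha_conn:
  assumes x: "x \<in> \<Omega>"
  shows "pd i (alpha_conn f j a b) x = - pd i (conn j a b) x"
proof -
  have "pd i (alpha_conn f j a b) x = pd i (\<lambda>y. - conn j a b y) x"
    by (rule pd_cong[OF open_dom x]) (simp add: alpha_conn_eq)
  then show ?thesis using pd_minus[OF has_partials_conn x] by simp
qed

lemma has_partials_alpha_conn: "has_partials_on \<Omega> (alpha_conn f j a b)"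
  by (rule has_partials_on_cong[OF open_dom has_partials_on_minus[OF has_partials_conn]]) (simp add:
      alpha_conn_eq)

lemma has_partials_spin_conn: "has_partials_on \<Omega> (spin_conn j)"
  unfolding spin_conn_def[abs_def]
  by (intro has_partials_on_sum
      has_partials_on_linear[OF bounded_linear_divide_scaleR] has_partials_alpha_conn) auto

lemma pd_spin_conn:
  assumes x: "x \<in> \<Omega>"
  shows "pd i (spin_conn j) x = (\<Sum>a\<in>UNIV. \<Sum>b\<in>UNIV. (- pd i (conn j a b) x / 8) *\<^sub>R gamma_comm a b)"
proof -
  have "pd i (spin_conn j) x = (\<Sum>a\<in>UNIV. pd i (\<lambda>y. \<Sum>b\<in>UNIV. (alpha_conn f j a b y / 8) *\<^sub>R
      gamma_comm a b) x)"
    unfolding spin_conn_def[abs_def]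
    by (rule pd_sum) (auto intro!: has_partials_on_sum
        has_partials_on_linear[OF bounded_linear_divide_scaleR] has_partials_alpha_conn x)
  also have "\<dots> = (\<Sum>a\<in>UNIV. \<Sum>b\<in>UNIV. pd i (\<lambda>y. (alpha_conn f j a b y / 8) *\<^sub>R gamma_comm a b) x)"
    by (rule sum.cong[OF refl], rule pd_sum) (auto intro!:
        has_partials_on_linear[OF bounded_linear_divide_scaleR] has_partials_alpha_conn x)
  also have "\<dots> = (\<Sum>a\<in>UNIV. \<Sum>b\<in>UNIV. (- pd i (conn j a b) x / 8) *\<^sub>R gamma_comm a b)"
    by (intro sum.cong refl) (simp add: pd_linear[OF bounded_linear_divide_scaleR has_partials_alpha_conn x] pd_alpha_conn[OF x])
  finally show ?thesis .
qed

definition spin_curv :: "3 \<Rightarrow> 3 \<Rightarrow> real^3 \<Rightarrow> complex^4^4" where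
  "spin_curv i j x = pd i (spin_conn j) x - pd j (spin_conn i) x + (spin_conn i x ** spin_conn j x
      - spin_conn j x ** spin_conn i x)"

lemma spin_curv_eq:
  assumes x: "x \<in> \<Omega>"
  shows "spin_curv i j x = (\<Sum>a\<in>UNIV. \<Sum>b\<in>UNIV. (- (1/8) * conn_curv i j a b x) *\<^sub>R gamma_comm a b)"
proof -
  have cc: "spin_conn i x ** spin_conn j x - spin_conn j x ** spin_conn i x = (\<Sum>a\<in>UNIV. \<Sum>b\<in>UNIV.
      (-8 * (\<Sum>d\<in>UNIV. alpha_conn f i a d x / 8 * (alpha_conn f j d b x / 8)
          - alpha_conn f j a d x / 8 * (alpha_conn f i d b x / 8))) *\<^sub>R gamma_comm a b)"
    unfolding spin_conn_def
  proof (rule gamma_comm_sum_commutator)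
    fix a b
    show "alpha_conn f i a b x / 8 = - (alpha_conn f i b a x / 8)"
      using conn_antisym[OF x, of i a b] by (simp add: alpha_conn_eq[OF x])
    show "alpha_conn f j a b x / 8 = - (alpha_conn f j b a x / 8)"
      using conn_antisym[OF x, of j a b] by (simp add: alpha_conn_eq[OF x])
  qed
  have comb: "\<And>p q r. (\<Sum>a\<in>UNIV. \<Sum>b\<in>UNIV. p a b *\<^sub>R gamma_comm a b)
      - (\<Sum>a\<in>UNIV. \<Sum>b\<in>UNIV. q a b *\<^sub>R gamma_comm a b)
     + (\<Sum>a\<in>UNIV. \<Sum>b\<in>UNIV. r a b *\<^sub>R gamma_comm a b) = (\<Sum>a\<in>UNIV. \<Sum>b\<in>UNIV. (p a b - q a b
         + r a b) *\<^sub>R gamma_comm a b)"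
    by (simp add: sum_subtractf[symmetric] sum.distrib[symmetric] scaleR_diff_left scaleR_add_left)
  have co: "- pd i (conn j a b) x / 8 - - pd j (conn i a b) x / 8
      + -8 * (\<Sum>d\<in>UNIV. alpha_conn f i a d x / 8 * (alpha_conn f j d b x / 8)
      - alpha_conn f j a d x / 8 * (alpha_conn f i d b x / 8)) = - (1/8) * conn_curv i j a b x" for a b
  proof -
    have "(\<Sum>d\<in>UNIV. alpha_conn f i a d x / 8 * (alpha_conn f j d b x / 8)
        - alpha_conn f j a d x / 8 * (alpha_conn f i d b x / 8))
       = (1/64) * (\<Sum>d\<in>UNIV. conn i a d x * conn j d b x - conn j a d x * conn i d b x)"
      by (simp add: alpha_conn_eq[OF x] sum_distrib_left algebra_simps)
    then show ?thesis by (simp add: conn_curv_def algebra_simps)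
  qed
  show ?thesis
    unfolding spin_curv_def pd_spin_conn[OF x] cc comb co by (rule refl)
qed

definition conn_curv_frame :: "3 \<Rightarrow> 3 \<Rightarrow> 3 \<Rightarrow> 3 \<Rightarrow> real^3 \<Rightarrow> real" where
  "conn_curv_frame c d a b x = (\<Sum>i\<in>UNIV. \<Sum>j\<in>UNIV. f c i x * f d j x * conn_curv i j a b x)"
definition riem_frame :: "3 \<Rightarrow> 3 \<Rightarrow> 3 \<Rightarrow> 3 \<Rightarrow> real^3 \<Rightarrow> real" where
  "riem_frame m b c d x = (\<Sum>k\<in>UNIV. \<Sum>i\<in>UNIV. \<Sum>j\<in>UNIV. f b k x * f c i x * f d j x * riem m k i j x)"

lemma conn_curv_antisym_ij: "conn_curv j i a b x = - conn_curv i j a b x"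
  by (simp add: conn_curv_def sum_subtractf algebra_simps)

lemma conn_curv_antisym_ab:
  assumes x: "x \<in> \<Omega>"
  shows "conn_curv i j b a x = - conn_curv i j a b x"
proof -
  have p: "pd i (conn j b a) x = - pd i (conn j a b) x" for i j
  proof -
    have "pd i (conn j b a) x = pd i (\<lambda>y. - conn j a b y) x"
      by (rule pd_cong[OF open_dom x]) (simp add: conn_antisym[of _ j b a])
    then show ?thesis using pd_minus[OF has_partials_conn x] by simp
  qed
  have s: "(\<Sum>d\<in>UNIV. conn i b d x * conn j d a x - conn j b d x * conn i d a x) =
      - (\<Sum>d\<in>UNIV. conn i a d x * conn j d b x - conn j a d x * conn i d b x)"
  proof -
    have "(\<Sum>d\<in>UNIV. conn i b d x * conn j d a x - conn j b d x * conn i d a x)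
        = (\<Sum>d\<in>UNIV. conn j a d x * conn i d b x - conn i a d x * conn j d b x)"
    proof (rule sum.cong[OF refl])
      fix d
      have e1: "conn i b d x = - conn i d b x" using conn_antisym[OF x, of i b d] .
      have e2: "conn j d a x = - conn j a d x" using conn_antisym[OF x, of j d a] .
      have e3: "conn j b d x = - conn j d b x" using conn_antisym[OF x, of j b d] .
      have e4: "conn i d a x = - conn i a d x" using conn_antisym[OF x, of i d a] .
      show "conn i b d x * conn j d a x - conn j b d x * conn i d a x = conn j a d x * conn i d b x
          - conn i a d x * conn j d b x"
        unfolding e1 e2 e3 e4 by (simp add: algebra_simps)
    qed
    also have "\<dots> = - (\<Sum>d\<in>UNIV. conn i a d x * conn j d b x - conn j a d x * conn i d b x)"
      by (simp add: sum_negf[symmetric] algebra_simps)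
    finally show ?thesis .
  qed
  show ?thesis unfolding conn_curv_def p s by simp
qed

lemma conn_curv_frame_antisym_cd: "conn_curv_frame d c a b x = - conn_curv_frame c d a b x"
proof -
  have "conn_curv_frame d c a b x = (\<Sum>j\<in>UNIV. \<Sum>i\<in>UNIV. f d j x * f c i x * conn_curv j i a b x)"
      by (simp add: conn_curv_frame_def)
  also have "\<dots> = (\<Sum>i\<in>UNIV. \<Sum>j\<in>UNIV. f d j x * f c i x * conn_curv j i a b x)" by (rule sum.swap)
  also have "\<dots> = (\<Sum>i\<in>UNIV. \<Sum>j\<in>UNIV. - (f c i x * f d j x * conn_curv i j a b x))"
    by (intro sum.cong refl) (subst conn_curv_antisym_ij, simp)
  also have "\<dots> = - conn_curv_frame c d a b x" by (simp add: conn_curv_frame_def sum_negf)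
  finally show ?thesis .
qed

lemma conn_curv_frame_antisym_ab: "x \<in> \<Omega> \<Longrightarrow> conn_curv_frame c d b a x = - conn_curv_frame c d a b x"
  by (simp add: conn_curv_frame_def conn_curv_antisym_ab[of x _ _ b a] sum_negf[symmetric])

lemma riem_bianchi:
  assumes x: "x \<in> \<Omega>"
  shows "riem m k i j x + riem m i j k x + riem m j k i x = 0"
proof -
  have e: "riem m k i j x + riem m i j k x + riem m j k i x = (pd i (chr f m j k) x
      - pd i (chr f m k j) x)
     + (pd j (chr f m k i) x - pd j (chr f m i k) x) + (pd k (chr f m i j) x - pd k (chr f m j i) x)
     + (\<Sum>n\<in>UNIV. chr f m i n x * (chr f n j k x - chr f n k j x) + chr f m j n x * (chr f n k i x
         - chr f n i k x)
          + chr f m k n x * (chr f n i j x - chr f n j i x))"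
    by (simp add: riem_def sum_3 algebra_simps)
  show ?thesis unfolding e
    by (simp add: pd_chr_sym[OF x, of i m j k] pd_chr_sym[OF x, of j m k i] pd_chr_sym[OF x, of k m i j]
       chr_sym[OF x, of _ j k] chr_sym[OF x, of _ k i] chr_sym[OF x, of _ i j])
qed

lemma conn_curv_frame_riem_frame:
  assumes x: "x \<in> \<Omega>"
  shows "conn_curv_frame c d a b x = (\<Sum>m\<in>UNIV. f_co f a m x * riem_frame m b c d x)"
proof -
  have "conn_curv_frame c d a b x
      = (\<Sum>i\<in>UNIV. \<Sum>j\<in>UNIV. \<Sum>m\<in>UNIV. \<Sum>k\<in>UNIV. f c i x * f d j x * (f_co f a m x * f b k x *
      riem m k i j x))"
    by (simp add: conn_curv_frame_def conn_curv_eq_riem[OF x] sum_distrib_left)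
  also have "\<dots> = (\<Sum>m\<in>UNIV. \<Sum>k\<in>UNIV. \<Sum>i\<in>UNIV. \<Sum>j\<in>UNIV. f c i x * f d j x * (f_co f a m x * f b k x *
      riem m k i j x))"
    by (rule sum_swap4)
  also have "\<dots> = (\<Sum>m\<in>UNIV. f_co f a m x * riem_frame m b c d x)"
    by (simp add: riem_frame_def sum_distrib_left mult_ac)
  finally show ?thesis .
qed

lemma conn_curv_frame_bianchi:
  assumes x: "x \<in> \<Omega>"
  shows "conn_curv_frame c d a b x + conn_curv_frame d b a c x + conn_curv_frame b c a d x = 0"
proof -
  have t2: "riem_frame m c d b x = (\<Sum>k\<in>UNIV. \<Sum>i\<in>UNIV. \<Sum>j\<in>UNIV. f b k x * f c i x * f d j x *
      riem m i j k x)" for m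
  proof -
    have "riem_frame m c d b x = (\<Sum>i\<in>UNIV. \<Sum>j\<in>UNIV. \<Sum>k\<in>UNIV. f b k x * f c i x * f d j x *
        riem m i j k x)"
      unfolding riem_frame_def by (simp add: mult_ac)
    also have "\<dots> = (\<Sum>k\<in>UNIV. \<Sum>i\<in>UNIV. \<Sum>j\<in>UNIV. f b k x * f c i x * f d j x * riem m i j k x)"
      by (rule sum_rotate3[symmetric])
    finally show ?thesis .
  qed
  have t3: "riem_frame m d b c x = (\<Sum>k\<in>UNIV. \<Sum>i\<in>UNIV. \<Sum>j\<in>UNIV. f b k x * f c i x * f d j x *
      riem m j k i x)" for m
  proof -
    have "riem_frame m d b c x = (\<Sum>j\<in>UNIV. \<Sum>k\<in>UNIV. \<Sum>i\<in>UNIV. f b k x * f c i x * f d j x *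
        riem m j k i x)"
      unfolding riem_frame_def by (simp add: mult_ac)
    also have "\<dots> = (\<Sum>k\<in>UNIV. \<Sum>i\<in>UNIV. \<Sum>j\<in>UNIV. f b k x * f c i x * f d j x * riem m j k i x)"
      by (rule sum_rotate3)
    finally show ?thesis .
  qed
  have "riem_frame m b c d x + riem_frame m c d b x + riem_frame m d b c x = 0" for m
  proof -
    have "riem_frame m b c d x + riem_frame m c d b x + riem_frame m d b c x
        = (\<Sum>k\<in>UNIV. \<Sum>i\<in>UNIV. \<Sum>j\<in>UNIV.
        f b k x * f c i x * f d j x * (riem m k i j x + riem m i j k x + riem m j k i x))"
      unfolding t2 t3 unfolding riem_frame_def by (simp add: sum.distrib[symmetric] algebra_simps)
    then show ?thesis by (simp add: riem_bianchi[OF x])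
  qed
  then show ?thesis
    by (simp add: conn_curv_frame_riem_frame[OF x] sum.distrib[symmetric] distrib_left[symmetric])
qed

lemma ricci_riem: "x \<in> \<Omega> \<Longrightarrow> ricci f k j x = (\<Sum>i\<in>UNIV. riem i k i j x)"
  by (simp add: ricci_def riem_def chr_sym[of x] pd_chr_sym[of x] sum_3 algebra_simps)

lemma sum_f_conn_curv:
  assumes x: "x \<in> \<Omega>"
  shows "(\<Sum>a\<in>UNIV. f a i x * conn_curv i j a c x) = (\<Sum>k\<in>UNIV. f c k x * riem i k i j x)"
proof -
  have "(\<Sum>a\<in>UNIV. f a i x * conn_curv i j a c x) = (\<Sum>m\<in>UNIV. (\<Sum>a\<in>UNIV. f a i x *
      f_co f a m x) * (\<Sum>k\<in>UNIV. f c k x * riem m k i j x))"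
    by (simp add: conn_curv_eq_riem[OF x] sum_3 algebra_simps)
  also have "\<dots> = (\<Sum>k\<in>UNIV. f c k x * riem i k i j x)"
    by (simp add: sum_f_f_co[OF x] sum_delta_mult)
  finally show ?thesis .
qed

lemma conn_curv_frame_trace:
  assumes x: "x \<in> \<Omega>"
  shows "(\<Sum>a\<in>UNIV. \<Sum>c\<in>UNIV. conn_curv_frame a c a c x) = scal f x"
proof -
  have inner: "(\<Sum>a\<in>UNIV. \<Sum>c\<in>UNIV. f a i x * f c j x * conn_curv i j a c x)
      = (\<Sum>c\<in>UNIV. f c j x * (\<Sum>a\<in>UNIV. f a i x * conn_curv i j a c x))" for i j
  proof -
    have "(\<Sum>a\<in>UNIV. \<Sum>c\<in>UNIV. f a i x * f c j x * conn_curv i j a c x)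
        = (\<Sum>c\<in>UNIV. \<Sum>a\<in>UNIV. f a i x * f c j x * conn_curv i j a c x)"
      by (rule sum.swap)
    also have "\<dots> = (\<Sum>c\<in>UNIV. f c j x * (\<Sum>a\<in>UNIV. f a i x * conn_curv i j a c x))"
      by (simp add: sum_distrib_left mult_ac)
    finally show ?thesis .
  qed
  have "(\<Sum>a\<in>UNIV. \<Sum>c\<in>UNIV. conn_curv_frame a c a c x)
      = (\<Sum>a\<in>UNIV. \<Sum>c\<in>UNIV. \<Sum>i\<in>UNIV. \<Sum>j\<in>UNIV. f a i x * f c j x * conn_curv i j a c x)"
    by (simp add: conn_curv_frame_def)
  also have "\<dots> = (\<Sum>i\<in>UNIV. \<Sum>j\<in>UNIV. \<Sum>a\<in>UNIV. \<Sum>c\<in>UNIV. f a i x * f c j x * conn_curv i j a c x)"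
    by (rule sum_swap4)
  also have "\<dots> = (\<Sum>i\<in>UNIV. \<Sum>j\<in>UNIV. \<Sum>c\<in>UNIV. f c j x * (\<Sum>a\<in>UNIV. f a i x * conn_curv i j a c x))"
    by (rule sum.cong[OF refl], rule sum.cong[OF refl], rule inner)
  also have "\<dots> = (\<Sum>i\<in>UNIV. \<Sum>j\<in>UNIV. \<Sum>k\<in>UNIV. hinv f j k x * riem i k i j x)"
    by (rule sum.cong[OF refl], rule sum.cong[OF refl]) (simp add: sum_f_conn_curv[OF x] hinv_def sum_3
        algebra_simps)
  also have "\<dots> = (\<Sum>j\<in>UNIV. \<Sum>k\<in>UNIV. hinv f j k x * (\<Sum>i\<in>UNIV. riem i k i j x))"
    by (simp add: sum_3 algebra_simps)
  also have "\<dots> = scal f x"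
    by (simp add: scal_def ricci_riem[OF x] hinv_sym sum_3 algebra_simps)
  finally show ?thesis .
qed

lemma frame_spin_curv:
  assumes x: "x \<in> \<Omega>"
  shows "(\<Sum>i\<in>UNIV. \<Sum>j\<in>UNIV. (f c i x * f d j x) *\<^sub>R spin_curv i j x)
    = (\<Sum>a\<in>UNIV. \<Sum>b\<in>UNIV. (- (1/8) * conn_curv_frame c d a b x) *\<^sub>R gamma_comm a b)"
proof -
  have "(\<Sum>i\<in>UNIV. \<Sum>j\<in>UNIV. (f c i x * f d j x) *\<^sub>R spin_curv i j x)
      = (\<Sum>i\<in>UNIV. \<Sum>j\<in>UNIV. \<Sum>a\<in>UNIV. \<Sum>b\<in>UNIV.
          (f c i x * f d j x * (- (1/8) * conn_curv i j a b x)) *\<^sub>R gamma_comm a b)"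
    by (simp add: spin_curv_eq[OF x] scaleR_sum_right)
  also have "\<dots> = (\<Sum>a\<in>UNIV. \<Sum>b\<in>UNIV. \<Sum>i\<in>UNIV. \<Sum>j\<in>UNIV.
      (f c i x * f d j x * (- (1/8) * conn_curv i j a b x)) *\<^sub>R gamma_comm a b)"
    by (rule sum_swap4)
  also have "\<dots> = (\<Sum>a\<in>UNIV. \<Sum>b\<in>UNIV. (\<Sum>i\<in>UNIV. \<Sum>j\<in>UNIV.
      f c i x * f d j x * (- (1/8) * conn_curv i j a b x)) *\<^sub>R gamma_comm a b)"
    by (simp only: scaleR_sum_left)
  also have "\<dots> = (\<Sum>a\<in>UNIV. \<Sum>b\<in>UNIV. (- (1/8) * conn_curv_frame c d a b x) *\<^sub>R gamma_comm a b)"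
    by (simp add: conn_curv_frame_def sum_distrib_left mult_ac)
  finally show ?thesis .
qed

lemma gamma_curved_spin_curv_contraction:
  assumes x: "x \<in> \<Omega>"
  shows "(\<Sum>i\<in>UNIV. \<Sum>j\<in>UNIV. gamma_curved i x ** gamma_curved j x ** spin_curv i j x)
    = (scal f x / 2) *\<^sub>R mat 1"
proof -
  have W: "(\<Sum>a\<in>UNIV. \<Sum>b\<in>UNIV. \<Sum>c\<in>UNIV. \<Sum>d\<in>UNIV.
      conn_curv_frame c d a b x *\<^sub>R (gamma_up c ** gamma_up d ** gamma_comm a b))
      = (-4 * (\<Sum>a\<in>UNIV. \<Sum>c\<in>UNIV. conn_curv_frame a c a c x)) *\<^sub>R mat 1"
  proof (rule gamma_curvature_contraction)
    fix a b c d
    show "conn_curv_frame c d a b x = - conn_curv_frame c d b a x"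
      using conn_curv_frame_antisym_ab[OF x, of c d a b] by simp
    show "conn_curv_frame c d a b x = - conn_curv_frame d c a b x"
      using conn_curv_frame_antisym_cd[of d c a b x] by simp
    show "conn_curv_frame c d a b x + conn_curv_frame d b a c x + conn_curv_frame b c a d x = 0"
      by (rule conn_curv_frame_bianchi[OF x])
  qed
  have "(\<Sum>i\<in>UNIV. \<Sum>j\<in>UNIV. gamma_curved i x ** gamma_curved j x ** spin_curv i j x)
     = (\<Sum>i\<in>UNIV. \<Sum>j\<in>UNIV. \<Sum>c\<in>UNIV. \<Sum>d\<in>UNIV.
          (f c i x * f d j x) *\<^sub>R (gamma_up c ** gamma_up d ** spin_curv i j x))"
    unfolding gamma_curved_def
    by (simp add: matrix_matrix_mult_distribs scaleR_sum_right)
      (rule sum.cong[OF refl], rule sum.cong[OF refl], subst sum.swap, simp add: mult.commute)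
  also have "\<dots> = (\<Sum>c\<in>UNIV. \<Sum>d\<in>UNIV.
      gamma_up c ** gamma_up d ** (\<Sum>i\<in>UNIV. \<Sum>j\<in>UNIV. (f c i x * f d j x) *\<^sub>R spin_curv i j x))"
    by (subst sum_swap4) (simp add: matrix_matrix_mult_distribs)
  also have "\<dots> = (\<Sum>c\<in>UNIV. \<Sum>d\<in>UNIV. \<Sum>a\<in>UNIV. \<Sum>b\<in>UNIV.
      (- (1/8) * conn_curv_frame c d a b x) *\<^sub>R (gamma_up c ** gamma_up d ** gamma_comm a b))"
    by (simp add: frame_spin_curv[OF x] matrix_matrix_mult_distribs)
  also have "\<dots> = (- (1/8)) *\<^sub>R (\<Sum>a\<in>UNIV. \<Sum>b\<in>UNIV. \<Sum>c\<in>UNIV. \<Sum>d\<in>UNIV.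
      conn_curv_frame c d a b x *\<^sub>R (gamma_up c ** gamma_up d ** gamma_comm a b))"
    by (subst sum_swap4) (simp add: scaleR_sum_right)
  also have "\<dots> = (- (1/8)) *\<^sub>R ((-4 * (\<Sum>a\<in>UNIV. \<Sum>c\<in>UNIV. conn_curv_frame a c a c x)) *\<^sub>R mat 1)"
    unfolding W ..
  also have "\<dots> = (scal f x / 2) *\<^sub>R mat 1" by (simp add: conn_curv_frame_trace[OF x])
  finally show ?thesis .
qed

end

section \<open>The Lichnerowicz formula\<close>

context dreibein
begin

lemma Hcal_eq: "Hcal f V y = \<i> *s (\<Sum>j\<in>UNIV. gamma_curved j y *v Dsp f j V y)"
proof -
  have "(\<Sum>a\<in>UNIV. \<Sum>j\<in>UNIV. f a j y *\<^sub>R (gamma_up a *v Dsp f j V y))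
      = (\<Sum>j\<in>UNIV. \<Sum>a\<in>UNIV. f a j y *\<^sub>R (gamma_up a *v Dsp f j V y))"
    by (rule sum.swap)
  also have "\<dots> = (\<Sum>j\<in>UNIV. gamma_curved j y *v Dsp f j V y)"
    by (simp add: gamma_curved_def matrix_vector_mult_distribs)
  finally show ?thesis by (simp add: Hcal_def)
qed

lemma Dsp_eq_fun: "Dsp f j V = (\<lambda>y. pd j V y + spin_conn j y *v V y)"
  by (rule ext) (simp add: Dsp_eq)

lemma has_partials_Dsp: "has_partials2_on \<Omega> V \<Longrightarrow> has_partials_on \<Omega> (Dsp f j V)"
  unfolding Dsp_eq_fun
  by (intro has_partials_on_add has_partials_on_bilinear[OF bounded_bilinear_matrix_vector_mult]
      has_partials_spin_conn has_partials2_onD)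

lemma pd_Dsp:
  assumes "has_partials2_on \<Omega> V" "x \<in> \<Omega>"
  shows "pd i (Dsp f j V) x
    = pd i (pd j V) x + (spin_conn j x *v pd i V x + pd i (spin_conn j) x *v V x)"
  using assms unfolding Dsp_eq_fun
  by (simp add: pd_add[OF has_partials2_onD(2)
        has_partials_on_bilinear[OF bounded_bilinear_matrix_vector_mult has_partials_spin_conn]]
      pd_bilinear[OF bounded_bilinear_matrix_vector_mult has_partials_spin_conn] has_partials2_onD)

lemma has_partials_gamma_curved_sum:
  "(\<And>j. has_partials_on \<Omega> (W j)) \<Longrightarrow> has_partials_on \<Omega> (\<lambda>y. \<Sum>j\<in>UNIV. gamma_curved j y *v W j y)"
  by (intro has_partials_on_sum has_partials_on_bilinear[OF bounded_bilinear_matrix_vector_mult]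
      has_partials_gamma_curved) auto

lemma pd_gamma_curved_sum:
  assumes W: "\<And>j. has_partials_on \<Omega> (W j)" and x: "x \<in> \<Omega>"
  shows "pd i (\<lambda>y. \<Sum>j\<in>UNIV. gamma_curved j y *v W j y) x
    = (\<Sum>j\<in>UNIV. gamma_curved j x *v pd i (W j) x + pd i (gamma_curved j) x *v W j x)"
proof -
  have "pd i (\<lambda>y. \<Sum>j\<in>UNIV. gamma_curved j y *v W j y) x
      = (\<Sum>j\<in>UNIV. pd i (\<lambda>y. gamma_curved j y *v W j y) x)"
    by (rule pd_sum) (auto intro: has_partials_on_bilinear[OF bounded_bilinear_matrix_vector_mult
          has_partials_gamma_curved W] x)
  also have "\<dots> = (\<Sum>j\<in>UNIV. gamma_curved j x *v pd i (W j) x + pd i (gamma_curved j) x *v W j x)"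
    by (rule sum.cong[OF refl])
      (rule pd_bilinear[OF bounded_bilinear_matrix_vector_mult has_partials_gamma_curved W x])
  finally show ?thesis .
qed

lemma has_partials_Hcal: "has_partials2_on \<Omega> U \<Longrightarrow> has_partials_on \<Omega> (Hcal f U)"
  unfolding Hcal_eq[abs_def]
  by (intro has_partials_on_linear[OF bounded_linear_vector_smult] has_partials_gamma_curved_sum
      has_partials_Dsp)

lemma gamma_curved_anticomm:
  "gamma_curved i x ** gamma_curved j x + gamma_curved j x ** gamma_curved i x
     = (-2 * hinv f i j x) *\<^sub>R mat 1"
proof -
  have mult: "gamma_curved i x ** gamma_curved j x
      = (\<Sum>b\<in>UNIV. \<Sum>a\<in>UNIV. (f b j x * f a i x) *\<^sub>R (gamma_up a ** gamma_up b))" for i j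
    by (simp add: gamma_curved_def matrix_matrix_mult_distribs scaleR_sum_right)
  have "gamma_curved i x ** gamma_curved j x + gamma_curved j x ** gamma_curved i x
      = (\<Sum>a\<in>UNIV. \<Sum>b\<in>UNIV. (f a i x * f b j x) *\<^sub>R
          (gamma_up a ** gamma_up b + gamma_up b ** gamma_up a))"
    unfolding mult
    by (subst (1) sum.swap) (simp add: sum.distrib[symmetric] scaleR_add_right mult.commute)
  also have "\<dots> = (\<Sum>a\<in>UNIV. \<Sum>b\<in>UNIV. (f a i x * f b j x * (if a = b then -2 else 0)) *\<^sub>R mat 1)"
    by (simp add: gamma_up_anticomm)
  also have "\<dots> = (-2 * hinv f i j x) *\<^sub>R mat 1"
    by (simp add: scaleR_sum_left[symmetric] hinv_def sum_distrib_left
        if_distrib[of "\<lambda>z. _ * z"] sum.delta cong: if_cong)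
      (simp add: scaleR_sum_left mult_ac)
  finally show ?thesis .
qed

definition cov_hess :: "(real^3 \<Rightarrow> complex^4) \<Rightarrow> 3 \<Rightarrow> 3 \<Rightarrow> real^3 \<Rightarrow> complex^4" where
  "cov_hess U i j x = Dsp f i (Dsp f j U) x - (\<Sum>k\<in>UNIV. chr f k i j x *\<^sub>R Dsp f k U x)"

lemma lap_eq_cov_hess: "lap f U x = (\<Sum>i\<in>UNIV. \<Sum>j\<in>UNIV. hinv f i j x *\<^sub>R cov_hess U i j x)"
  by (simp add: lap_def cov_hess_def)

text \<open>Since \<open>\<gamma>\<^sup>j\<close> is parallel, \<open>\<nabla>\<^sub>i\<close> commutes with Clifford multiplication.\<close>
lemma Dsp_Hcal:
  assumes U: "has_partials2_on \<Omega> U" and x: "x \<in> \<Omega>"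
  shows "Dsp f i (Hcal f U) x = \<i> *s (\<Sum>j\<in>UNIV. gamma_curved j x *v cov_hess U i j x)"
proof -
  define DU where "DU j = Dsp f j U" for j
  define V where "V = (\<lambda>y. \<Sum>j\<in>UNIV. gamma_curved j y *v DU j y)"
  have DU: "has_partials_on \<Omega> (DU j)" for j unfolding DU_def by (rule has_partials_Dsp[OF U])
  have HU: "Hcal f U = (\<lambda>y. \<i> *s V y)" by (rule ext) (simp add: Hcal_eq V_def DU_def)
  have pd_HU: "pd i (Hcal f U) x = \<i> *s pd i V x"
    unfolding HU V_def by (rule pd_linear[OF bounded_linear_vector_smult
        has_partials_gamma_curved_sum[OF DU] x])
  have parallel: "pd i (gamma_curved j) x
      = gamma_curved j x ** spin_conn i x - spin_conn i x ** gamma_curved j x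
        - (\<Sum>k\<in>UNIV. chr f j i k x *\<^sub>R gamma_curved k x)" for j
    using gamma_curved_parallel[OF x, of i j] by (simp add: algebra_simps)
  have reindex: "(\<Sum>j\<in>UNIV. \<Sum>k\<in>UNIV. chr f j i k x *\<^sub>R (gamma_curved k x *v DU j x))
      = (\<Sum>j\<in>UNIV. gamma_curved j x *v (\<Sum>k\<in>UNIV. chr f k i j x *\<^sub>R DU k x))"
    by (subst sum.swap) (simp add: matrix_vector_mult_distribs)
  have "pd i V x + spin_conn i x *v V x
      = (\<Sum>j\<in>UNIV. gamma_curved j x *v pd i (DU j) x + pd i (gamma_curved j) x *v DU j x
          + (spin_conn i x ** gamma_curved j x) *v DU j x)"
    unfolding V_def pd_gamma_curved_sum[OF DU x]
    by (simp add: matrix_vector_mult_distribs matrix_vector_mul_assoc sum.distrib)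
  also have "\<dots> = (\<Sum>j\<in>UNIV. gamma_curved j x *v Dsp f i (DU j) x
      - (\<Sum>k\<in>UNIV. chr f j i k x *\<^sub>R (gamma_curved k x *v DU j x)))"
    by (intro sum.cong refl)
      (simp add: parallel Dsp_eq matrix_vector_mult_distribs matrix_vector_mul_assoc algebra_simps)
  also have "\<dots> = (\<Sum>j\<in>UNIV. gamma_curved j x *v cov_hess U i j x)"
    unfolding sum_subtractf reindex
    by (simp add: cov_hess_def DU_def matrix_vector_mult_distribs sum_subtractf)
  finally have V_eq: "pd i V x + spin_conn i x *v V x = (\<Sum>j\<in>UNIV. gamma_curved j x *v
      cov_hess U i j x)" .
  have "Dsp f i (Hcal f U) x = \<i> *s (pd i V x + spin_conn i x *v V x)"
    unfolding Dsp_eq pd_HU by (simp add: HU vector_smult_distribs)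
  then show ?thesis unfolding V_eq .
qed

lemma Hcal_Hcal:
  assumes U: "has_partials2_on \<Omega> U" and x: "x \<in> \<Omega>"
  shows "Hcal f (Hcal f U) x
    = - (\<Sum>i\<in>UNIV. \<Sum>j\<in>UNIV. (gamma_curved i x ** gamma_curved j x) *v cov_hess U i j x)"
  by (simp add: Hcal_eq Dsp_Hcal[OF U x] vector_smult_distribs vector_smult_assoc
      matrix_vector_mult_distribs matrix_vector_mul_assoc sum_negf)

lemma cov_hess_antisym:
  assumes U: "has_partials2_on \<Omega> U" and x: "x \<in> \<Omega>"
    and U_sym: "\<And>i j. pd i (pd j U) x = pd j (pd i U) x"
  shows "cov_hess U i j x - cov_hess U j i x = spin_curv i j x *v U x"
proof -
  have "cov_hess U i j x - cov_hess U j i x = Dsp f i (Dsp f j U) x - Dsp f j (Dsp f i U) x"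
    by (simp add: cov_hess_def chr_sym[OF x, of _ j i])
  also have "\<dots> = spin_curv i j x *v U x"
    by (simp add: Dsp_eq pd_Dsp[OF U x] U_sym spin_curv_def matrix_vector_mult_distribs
        matrix_vector_mul_assoc algebra_simps)
  finally show ?thesis .
qed

lemma gamma_curved_sum_cov_hess:
  assumes U: "has_partials2_on \<Omega> U" and x: "x \<in> \<Omega>"
    and U_sym: "\<And>i j. pd i (pd j U) x = pd j (pd i U) x"
  shows "(\<Sum>i\<in>UNIV. \<Sum>j\<in>UNIV. (gamma_curved i x ** gamma_curved j x) *v cov_hess U i j x)
    = - lap f U x + (scal f x / 4) *\<^sub>R U x"
    (is "?S = _")
proof -
  let ?G = "\<lambda>i j. gamma_curved i x ** gamma_curved j x"
  have "?S = (\<Sum>i\<in>UNIV. \<Sum>j\<in>UNIV. ?G i j *v cov_hess U j i x + (?G i j ** spin_curv i j x) *v U x)"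
    using cov_hess_antisym[OF U x U_sym]
    by (intro sum.cong refl) (metis diff_add_cancel add.commute matrix_vector_mult_distribs(2)
        matrix_vector_mul_assoc)
  also have "\<dots> = (\<Sum>i\<in>UNIV. \<Sum>j\<in>UNIV. ?G j i *v cov_hess U i j x)
      + (\<Sum>i\<in>UNIV. \<Sum>j\<in>UNIV. (?G i j ** spin_curv i j x) *v U x)"
    by (simp add: sum.distrib) (rule sum.swap)
  also have "(\<Sum>i\<in>UNIV. \<Sum>j\<in>UNIV. ?G j i *v cov_hess U i j x) = (-2) *\<^sub>R lap f U x - ?S"
  proof -
    have "(\<Sum>i\<in>UNIV. \<Sum>j\<in>UNIV. ?G j i *v cov_hess U i j x)
        = (\<Sum>i\<in>UNIV. \<Sum>j\<in>UNIV. ((-2 * hinv f i j x) *\<^sub>R mat 1 - ?G i j) *v cov_hess U i j x)"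
      by (intro sum.cong refl) (metis gamma_curved_anticomm add_diff_cancel_left')
    then show ?thesis
      by (simp add: lap_eq_cov_hess matrix_vector_mult_distribs sum_subtractf scaleR_sum_right)
  qed
  also have "(\<Sum>i\<in>UNIV. \<Sum>j\<in>UNIV. (?G i j ** spin_curv i j x) *v U x) = (scal f x / 2) *\<^sub>R U x"
    by (simp add: gamma_curved_spin_curv_contraction[OF x]
        bounded_bilinear.scaleR_left[OF bounded_bilinear_matrix_vector_mult]
        flip: bounded_bilinear.sum_left[OF bounded_bilinear_matrix_vector_mult])
  finally have "?S + ?S = (-2) *\<^sub>R lap f U x + (scal f x / 2) *\<^sub>R U x"
    by (simp add: algebra_simps)
  then have "(1/2 :: real) *\<^sub>R (?S + ?S) = (1/2 :: real) *\<^sub>R ((-2) *\<^sub>R lap f U x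
      + (scal f x / 2) *\<^sub>R U x)"
    by (rule arg_cong)
  then show ?thesis
    by (simp add: scaleR_diff_right scaleR_add_right flip: scaleR_2)
qed

theorem lichnerowicz:
  assumes "has_partials2_on \<Omega> U" "x \<in> \<Omega>" "\<And>i j. pd i (pd j U) x = pd j (pd i U) x"
  shows "Hcal f (Hcal f U) x = lap f U x - (scal f x / 4) *\<^sub>R U x"
  using Hcal_Hcal[OF assms(1,2)] gamma_curved_sum_cov_hess[OF assms] by simp

end

section \<open>The square of the Dirac Hamiltonian\<close>

context dreibein
begin

lemma gamma0_comm_spin_conn: "gamma0 ** spin_conn j x = spin_conn j x ** gamma0"
  by (simp add: spin_conn_def matrix_matrix_mult_distribs gamma0_comm_gamma_comm)

lemma gamma0_anticomm_gamma_curved: "gamma_curved j x ** gamma0 = - (gamma0 ** gamma_curved j x)"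
  by (simp add: gamma_curved_def matrix_matrix_mult_distribs gamma0_anticomm sum_negf)

lemma Dsp_gamma0:
  assumes H: "has_partials_on \<Omega> H" and U: "has_partials_on \<Omega> U" and x: "x \<in> \<Omega>"
  shows "Dsp f j (\<lambda>y. - (gamma0 *v (H y + c *s U y))) x
    = - (gamma0 *v (Dsp f j H x + c *s Dsp f j U x))"
proof -
  note lin = bounded_linear_minus[OF matrix_vector_mul_bounded_linear[of gamma0]]
  have HU: "has_partials_on \<Omega> (\<lambda>y. H y + c *s U y)"
    by (rule has_partials_on_add[OF H has_partials_on_linear[OF bounded_linear_vector_smult U]])
  have "pd j (\<lambda>y. - (gamma0 *v (H y + c *s U y))) x = - (gamma0 *v (pd j H x + c *s pd j U x))"
    using pd_linear[OF lin HU x, of j] pd_add[OF H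
        has_partials_on_linear[OF bounded_linear_vector_smult U] x, of j]
      pd_linear[OF bounded_linear_vector_smult U x, of j] by simp
  then show ?thesis
    by (simp add: Dsp_eq matrix_vector_mult_distribs vector_smult_distribs matrix_vector_mul_assoc
        gamma0_comm_spin_conn)
qed

lemma Hcal_gamma0:
  assumes H: "has_partials_on \<Omega> H" and U: "has_partials_on \<Omega> U" and x: "x \<in> \<Omega>"
  shows "Hcal f (\<lambda>y. - (gamma0 *v (H y + c *s U y))) x = gamma0 *v (Hcal f H x + c *s Hcal f U x)"
proof -
  have "Hcal f (\<lambda>y. - (gamma0 *v (H y + c *s U y))) x
      = \<i> *s (\<Sum>j\<in>UNIV. gamma_curved j x *v (- (gamma0 *v (Dsp f j H x + c *s Dsp f j U x))))"
    by (simp add: Hcal_eq Dsp_gamma0[OF H U x])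
  also have "\<dots> = \<i> *s (\<Sum>j\<in>UNIV. gamma0 *v (gamma_curved j x *v (Dsp f j H x + c *s Dsp f j U x)))"
    by (simp add: matrix_vector_mul_assoc gamma0_anticomm_gamma_curved matrix_vector_mult_distribs)
  also have "\<dots> = gamma0 *v (Hcal f H x + c *s Hcal f U x)"
    by (simp add: Hcal_eq matrix_vector_mult_distribs vector_smult_distribs sum.distrib
        vector_smult_assoc mult.commute)
  finally show ?thesis .
qed

text \<open>\<open>\<gamma>\<^sup>0\<close> anticommutes with \<open>\<H>\<close>, so the cross terms cancel and \<open>H\<^sup>2 = m\<^sup>2 - \<H>\<^sup>2\<close>.\<close>
lemma Hop_square:
  assumes U: "has_partials2_on \<Omega> U" and x: "x \<in> \<Omega>"
  shows "Hop f m (Hop f m U) x = - Hcal f (Hcal f U) x + m\<^sup>2 *\<^sub>R U x"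
proof -
  have "Hcal f (Hop f m U) x = gamma0 *v (Hcal f (Hcal f U) x + complex_of_real m *s Hcal f U x)"
    unfolding Hop_def[abs_def]
    by (rule Hcal_gamma0[OF has_partials_Hcal[OF U] has_partials2_onD(1)[OF U] x])
  then have "Hop f m (Hop f m U) x = - (gamma0 *v (gamma0 *v (Hcal f (Hcal f U) x
      + complex_of_real m *s Hcal f U x)
      + complex_of_real m *s (- (gamma0 *v (Hcal f U x + complex_of_real m *s U x)))))"
    by (simp add: Hop_def[of f m "Hop f m U"] Hop_def[of f m U])
  also have "\<dots> = - Hcal f (Hcal f U) x + m\<^sup>2 *\<^sub>R U x"
    by (simp add: matrix_vector_mul_assoc gamma0_square matrix_vector_mult_distribs
        vector_smult_distribs vector_smult_assoc vec_eq_iff scaleR_complex power2_eq_square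
        algebra_simps)
  finally show ?thesis .
qed

lemma has_partials_Hop: "has_partials2_on \<Omega> U \<Longrightarrow> has_partials_on \<Omega> (Hop f m U)"
  unfolding Hop_def[abs_def]
  by (intro has_partials_on_linear[OF bounded_linear_minus[OF matrix_vector_mul_bounded_linear]]
      has_partials_on_add has_partials_Hcal has_partials_on_linear[OF bounded_linear_vector_smult]
      has_partials2_onD(1))

lemma Hop_cong:
  assumes x: "x \<in> \<Omega>" and eq: "\<And>y. y \<in> \<Omega> \<Longrightarrow> V y = W y"
  shows "Hop f m V x = Hop f m W x"
proof -
  have "pd j V x = pd j W x" for j by (rule pd_cong[OF open_dom x eq])
  then show ?thesis by (simp add: Hop_def Hcal_def Dsp_def eq[OF x])
qed

lemma Hop_smult:
  assumes H: "has_partials_on \<Omega> H" and x: "x \<in> \<Omega>"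
  shows "Hop f m (\<lambda>y. c *s H y) x = c *s Hop f m H x"
proof -
  have pd_smult: "pd j (\<lambda>y. c *s H y) x = c *s pd j H x" for j
    by (rule pd_linear[OF bounded_linear_vector_smult H x])
  show ?thesis
    unfolding Hop_def Hcal_def Dsp_def pd_smult
    by (simp add: vector_smult_distribs matrix_vector_mult_distribs vec_eq_iff algebra_simps)
qed

end

lemma iter_dpart_space_slice:
  "iter_dpart (map (\<lambda>v. (0::real, v)) vs) (\<lambda>(t, x). u t x) (t, x) = iter_dpart vs (u t) x"
proof (induction vs arbitrary: t x)
  case Nil then show ?case by simp
next
  case (Cons v vs)
  have "iter_dpart (map (\<lambda>v. (0::real, v)) (v # vs)) (\<lambda>(t,x). u t x) (t, x)
     = vector_derivative
         (\<lambda>s. iter_dpart (map (\<lambda>v. (0::real, v)) vs) (\<lambda>(t,x). u t x) (t, x + s *\<^sub>R v)) (at 0)"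
    by (simp add: dpart_def)
  also have "\<dots> = vector_derivative (\<lambda>s. iter_dpart vs (u t) (x + s *\<^sub>R v)) (at 0)"
    using Cons.IH by simp
  finally show ?case by (simp add: dpart_def)
qed

lemma dpart_time: "dpart (1::real, 0::real^3) (\<lambda>(t, x). u t x) (t, x) = dt u t x"
  unfolding dpart_def dt_def by (simp add: vector_derivative_shift[of "\<lambda>s. u s x" t])

lemma Basis_space: "(0::real, axis i (1::real)) \<in> Basis"
  and Basis_time: "(1::real, 0::real^3) \<in> Basis"
  by (simp_all add: Basis_prod_def)

context
  fixes u :: "real \<Rightarrow> real^3 \<Rightarrow> 'b::euclidean_space" and \<Omega> :: "(real^3) set"
  assumes smooth_u: "smooth_on (UNIV \<times> \<Omega>) (\<lambda>(t, x). u t x)"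
begin

lemma has_partials2_space_slice: "has_partials2_on \<Omega> (u s)"
  unfolding has_partials2_on_def
proof (intro conjI allI)
  show "has_partials_on \<Omega> (u s)"
  proof (rule has_partials_onI)
    fix y i assume y: "y \<in> \<Omega>"
    have "((\<lambda>\<sigma>. iter_dpart [] (\<lambda>(t,x). u t x) ((s,y) + \<sigma> *\<^sub>R (0, axis i 1))) has_vector_derivative
       dpart (0, axis i 1) (iter_dpart [] (\<lambda>(t,x). u t x)) (s,y)) (at 0)"
      by (rule smooth_onD(2)[OF smooth_u]) (use y Basis_space in auto)
    then show "\<exists>D. ((\<lambda>\<sigma>. u s (y + \<sigma> *\<^sub>R axis i 1)) has_vector_derivative D) (at 0)" by auto
  qed
  fix j show "has_partials_on \<Omega> (pd j (u s))"
  proof (rule has_partials_onI)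
    fix y i assume y: "y \<in> \<Omega>"
    have "((\<lambda>\<sigma>. iter_dpart [(0, axis j 1)] (\<lambda>(t,x). u t x) ((s,y) + \<sigma> *\<^sub>R (0, axis i 1)))
        has_vector_derivative
          dpart (0, axis i 1) (iter_dpart [(0, axis j 1)] (\<lambda>(t,x). u t x)) (s,y)) (at 0)"
      by (rule smooth_onD(2)[OF smooth_u]) (use y Basis_space in auto)
    then show "\<exists>D. ((\<lambda>\<sigma>. pd j (u s) (y + \<sigma> *\<^sub>R axis i 1)) has_vector_derivative D) (at 0)"
      using iter_dpart_space_slice[of "[axis j 1]" u s] by (auto simp: pd_eq_dpart)
  qed
qed

lemma space_slice_pd_commute:
  assumes "open \<Omega>" "y \<in> \<Omega>"
  shows "pd i (pd j (u s)) y = pd j (pd i (u s)) y"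
proof -
  have "dpart (0, axis i 1) (dpart (0, axis j 1) (\<lambda>(t, x). u t x)) (s, y)
      = dpart (0, axis j 1) (dpart (0, axis i 1) (\<lambda>(t, x). u t x)) (s, y)"
    by (rule smooth_on_dpart_commute[OF open_Times[OF open_UNIV assms(1)] smooth_u])
      (use assms(2) Basis_space in auto)
  then show ?thesis
    using iter_dpart_space_slice[of "[axis i 1, axis j 1]" u s y]
      iter_dpart_space_slice[of "[axis j 1, axis i 1]" u s y]
    by (simp add: pd_eq_dpart)
qed

lemma has_vector_derivative_dt:
  assumes "y \<in> \<Omega>"
  shows "((\<lambda>s. u s y) has_vector_derivative dt u t y) (at t)"
proof -
  have "((\<lambda>\<sigma>. iter_dpart [] (\<lambda>(t,x). u t x) ((t,y) + \<sigma> *\<^sub>R (1, 0))) has_vector_derivative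
       dpart (1, 0) (iter_dpart [] (\<lambda>(t,x). u t x)) (t,y)) (at 0)"
    by (rule smooth_onD(2)[OF smooth_u]) (use assms Basis_time in auto)
  then have "((\<lambda>\<sigma>. u (t + \<sigma>) y) has_vector_derivative dt u t y) (at 0)"
    by (simp add: dpart_time)
  then show ?thesis using has_vector_derivative_shift_iff[of "\<lambda>s. u s y" t] by simp
qed

lemma has_vector_derivative_pd_dt:
  assumes "open \<Omega>" "y \<in> \<Omega>"
  shows "((\<lambda>s. pd j (u s) y) has_vector_derivative pd j (dt u t) y) (at t)"
proof -
  have "((\<lambda>\<sigma>. iter_dpart [(0, axis j 1)] (\<lambda>(t,x). u t x) ((t,y) + \<sigma> *\<^sub>R (1, 0)))
      has_vector_derivative dpart (1, 0) (iter_dpart [(0, axis j 1)] (\<lambda>(t,x). u t x)) (t,y)) (at 0)"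
    by (rule smooth_onD(2)[OF smooth_u]) (use assms Basis_time Basis_space in auto)
  moreover have "dpart (1, 0) (iter_dpart [(0, axis j 1)] (\<lambda>(t,x). u t x)) (t,y)
      = dpart (0, axis j 1) (dpart (1, 0) (\<lambda>(t,x). u t x)) (t,y)"
    by (simp, rule smooth_on_dpart_commute[OF open_Times[OF open_UNIV assms(1)] smooth_u])
      (use assms Basis_time Basis_space in auto)
  moreover have "dpart (0, axis j 1) (dpart (1, 0) (\<lambda>(t,x). u t x)) (t,y) = pd j (dt u t) y"
    unfolding dpart_def[of "(0, axis j 1)"] pd_def dpart_def[of "axis j 1"]
    by (simp add: dpart_time)
  ultimately have "((\<lambda>\<sigma>. pd j (u (t + \<sigma>)) y) has_vector_derivative pd j (dt u t) y) (at 0)"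
    using iter_dpart_space_slice[of "[axis j 1]" u "_ + _" y] by (simp add: pd_eq_dpart)
  then show ?thesis using has_vector_derivative_shift_iff[of "\<lambda>s. pd j (u s) y" t] by simp
qed

end

context dreibein
begin

lemma has_vector_derivative_Hop:
  fixes u :: "real \<Rightarrow> real^3 \<Rightarrow> complex^4"
  assumes smooth_u: "smooth_on (UNIV \<times> \<Omega>) (\<lambda>(t, x). u t x)" and x: "x \<in> \<Omega>"
  shows "((\<lambda>s. Hop f m (u s) x) has_vector_derivative Hop f m (dt u t) x) (at t)"
  unfolding Hop_def Hcal_def Dsp_def
  by (intro has_vector_derivative_minus
      bounded_linear.has_vector_derivative[OF matrix_vector_mul_bounded_linear]
      has_vector_derivative_add bounded_linear.has_vector_derivative[OF bounded_linear_vector_smult]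
      has_vector_derivative_sum bounded_linear.has_vector_derivative[OF bounded_linear_scaleR_right]
      has_vector_derivative_dt[OF smooth_u x] has_vector_derivative_pd_dt[OF smooth_u open_dom x])

text \<open>Since \<open>H\<close> does not depend on time, applying \<open>\<phi> \<partial>\<^sub>t\<close> to \<open>\<phi> \<partial>\<^sub>t u = -\<i> H u\<close> gives
  \<open>(\<phi> \<partial>\<^sub>t)\<^sup>2 u = -H\<^sup>2 u\<close>; no regularity of \<open>\<phi>\<close> is needed.\<close>
lemma dirac_time_square:
  fixes u :: "real \<Rightarrow> real^3 \<Rightarrow> complex^4"
  assumes smooth_u: "smooth_on (UNIV \<times> \<Omega>) (\<lambda>(t, x). u t x)" and \<phi>_pos: "\<phi> t > 0"
    and dirac: "\<And>s y. y \<in> \<Omega> \<Longrightarrow> (\<i> * complex_of_real (\<phi> s)) *s dt u s y = Hop f m (u s) y"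
    and x: "x \<in> \<Omega>"
  shows "\<phi> t *\<^sub>R dt (\<lambda>s y. \<phi> s *\<^sub>R dt u s y) t x = - Hop f m (Hop f m (u t)) x"
proof -
  have \<phi>_nz: "complex_of_real (\<phi> t) \<noteq> 0" using \<phi>_pos by simp
  have \<phi>_dt: "\<phi> s *\<^sub>R dt u s y = (- \<i>) *s Hop f m (u s) y" if "y \<in> \<Omega>" for s y
    by (simp add: dirac[OF that, symmetric] scaleR_eq_vector_smult vector_smult_assoc)
  have dt_u: "dt u t y = (- \<i> / complex_of_real (\<phi> t)) *s Hop f m (u t) y" if "y \<in> \<Omega>" for y
    using \<phi>_nz by (simp add: dirac[OF that, symmetric] vector_smult_assoc field_simps)
  have "dt (\<lambda>s y. \<phi> s *\<^sub>R dt u s y) t x = vector_derivative (\<lambda>s. \<phi> s *\<^sub>R dt u s x) (at t)"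
    by (simp add: dt_def[of "\<lambda>s y. \<phi> s *\<^sub>R dt u s y"])
  also have "\<dots> = vector_derivative (\<lambda>s. (- \<i>) *s Hop f m (u s) x) (at t)"
    using \<phi>_dt[OF x] by simp
  also have "\<dots> = (- \<i>) *s Hop f m (dt u t) x"
    by (rule vector_derivative_at bounded_linear.has_vector_derivative[OF bounded_linear_vector_smult
          has_vector_derivative_Hop[OF smooth_u x]])+
  also have "Hop f m (dt u t) x = Hop f m (\<lambda>y. (- \<i> / complex_of_real (\<phi> t)) *s Hop f m (u t) y) x"
    by (rule Hop_cong[OF x dt_u])
  also have "\<dots> = (- \<i> / complex_of_real (\<phi> t)) *s Hop f m (Hop f m (u t)) x"
    by (rule Hop_smult[OF has_partials_Hop[OF has_partials2_space_slice[OF smooth_u]] x])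
  finally show ?thesis
    using \<phi>_nz by (simp add: scaleR_eq_vector_smult vector_smult_assoc field_simps)
qed

end

theorem corollary3p5:
  fixes f :: "3 \<Rightarrow> 3 \<Rightarrow> real^3 \<Rightarrow> real"
    and \<Omega> :: "(real^3) set"
    and \<phi> :: "real \<Rightarrow> real"
    and m :: real
    and u :: "real \<Rightarrow> real^3 \<Rightarrow> complex^4"
  assumes "open \<Omega>" and "connected \<Omega>"
    and "\<And>a i. smooth_on \<Omega> (f a i)"
    and "\<And>x. x \<in> \<Omega> \<Longrightarrow> det (\<chi> a i. f a i x) \<noteq> 0"
    and "smooth_on UNIV \<phi>" and "\<And>t. \<phi> t > 0"
    and "m \<ge> 0"
    and "smooth_on (UNIV \<times> \<Omega>) (\<lambda>(t, x). u t x)"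
    and "\<And>t x. x \<in> \<Omega> \<Longrightarrow>
           (\<i> * complex_of_real (\<phi> t)) *s dt u t x - Hop f m (u t) x = 0"
  shows "\<And>t x. x \<in> \<Omega> \<Longrightarrow>
           - (\<phi> t *\<^sub>R dt (\<lambda>s y. \<phi> s *\<^sub>R dt u s y) t x)
           + lap f (u t) x - (scal f x / 4) *\<^sub>R u t x - m\<^sup>2 *\<^sub>R u t x = 0"
proof -
  fix t x assume x: "x \<in> \<Omega>"
  interpret dreibein f \<Omega> using assms(1,3,4) by unfold_locales
  note smooth_u = assms(8)
  have "\<phi> t *\<^sub>R dt (\<lambda>s y. \<phi> s *\<^sub>R dt u s y) t x = - Hop f m (Hop f m (u t)) x"
    by (rule dirac_time_square[where \<phi> = \<phi>, OF smooth_u assms(6)]) (use assms(9) x in auto)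
  moreover have "Hop f m (Hop f m (u t)) x = - Hcal f (Hcal f (u t)) x + m\<^sup>2 *\<^sub>R u t x"
    by (rule Hop_square[OF has_partials2_space_slice[OF smooth_u] x])
  moreover have "Hcal f (Hcal f (u t)) x = lap f (u t) x - (scal f x / 4) *\<^sub>R u t x"
    by (rule lichnerowicz[OF has_partials2_space_slice[OF smooth_u] x
          space_slice_pd_commute[OF smooth_u assms(1) x]])
  ultimately show "- (\<phi> t *\<^sub>R dt (\<lambda>s y. \<phi> s *\<^sub>R dt u s y) t x)
      + lap f (u t) x - (scal f x / 4) *\<^sub>R u t x - m\<^sup>2 *\<^sub>R u t x = 0"
    by simp
qed

end
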